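(* Let $\mathcal C,\mathcal D$ be parsummable categories, $F\colon\mathcal C\to\mathcal D$ a sum-preserving functor of underlying categories, and $\mu\colon\mathbf 2\times\omega\to\omega$ a fixed injection. Then: (1) the functor $F_\mu$ preserves sums, so that $\mathrm{Cyl}(F)=(F_\mu)_*(\mathcal C\times\mathcal D)$ is a well-defined parsummable category, and $I^{(1)}\colon\mathcal C\to\mathrm{Cyl}(F)$ and $I^{(2)}\colon\mathcal D\to\mathrm{Cyl}(F)$ are morphisms of parsummable categories; (2) $I^{(1)}$ is an underlying equivalence of categories if $F$ is an equivalence of categories; (3) $I^{(2)}$ is an underlying equivalence of categories.
   Context: Let $\omega=\{1,2,\dots\}$, $\mathcal M$ the monoid of injections $\omega\to\omega$, $E\mathcal M$ the category with objects $\mathcal M$ and unique morphisms between any two objects. A parsummable category is a small $E\mathcal M$-category $\mathcal C$ (strict action; $u_*$ the action of $u$; $u^X_\circ\colon X\to u_*X$ and more generally $[v,u]\colon u_*\Rightarrow v_*$ the induced isomorphisms) in which every object $X$ has finite support $\mathrm{supp}(X)$ (the intersection of finite $A\subset\omega$ with $u_*X=X$ for all $u$ fixing $A$ pointwise), equipped with an object $0$ of empty support and a functor $+$ on the full subcategory $\mathcal C\boxtimes\mathcal C\subset\mathcal C\times\mathcal C$ of disjointly supported pairs that is strictly unital, associative, commutative and $E\mathcal M$-equivariant; morphisms are strictly equivariant functors preserving $0,+$. The product $\mathcal C\times\mathcal D$ of parsummable categories is a parsummable category with componentwise action and sum. For an injection $\phi\colon A\times\omega\to\omega$, $\phi_*(X_\bullet)=\sum_a\phi(a,-)_*(X_a)$;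 write $\mu_*\colon\mathcal D\times\mathcal D\to\mathcal D$. A functor $G\colon\mathcal C\to\mathcal D$ of underlying categories preserves sums if $G(0)=0$, $G\times G$ maps $\mathcal C\boxtimes\mathcal C$ into $\mathcal D\boxtimes\mathcal D$, and $G$ commutes with $+$ on objects and morphisms. For such $G$, $G_*\mathcal C$ is the parsummable category with objects those of $\mathcal C$, $\mathrm{Hom}_{G_*\mathcal C}(X,Y)=\mathrm{Hom}_{\mathcal D}(GX,GY)$, $\mathcal M$-action on objects from $\mathcal C$, structure isomorphisms $G(u^X_\circ)$, sum of objects from $\mathcal C$ and of morphisms from $\mathcal D$; $I\colon\mathcal C\to G_*\mathcal C$ is the identity on objects and $f\mapsto G(f)$ on morphisms. $F_\mu=\mu_*\circ(F\times\mathrm{id})\colon\mathcal C\times\mathcal D\to\mathcal D$; $\mathrm{Cyl}(F)=(F_\mu)_*(\mathcal C\times\mathcal D)$; $I^{(1)}=I\circ(-,0)\colon\mathcal C\to\mathrm{Cyl}(F)$ and $I^{(2)}=I\circ(0,-)\colon\mathcal D\to\mathrm{Cyl}(F)$. *)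

theory Defs
  imports Main
begin

record ('o,'m) cat =
  Obj  :: "'o set"
  Mor  :: "'m set"
  Dom  :: "'m \<Rightarrow> 'o"
  Cod  :: "'m \<Rightarrow> 'o"
  Idm  :: "'o \<Rightarrow> 'm"
  Comp :: "'m \<Rightarrow> 'm \<Rightarrow> 'm"   (* Comp C g f = g \<circ> f *)

definition hom :: "('o,'m,'x) cat_scheme \<Rightarrow> 'o \<Rightarrow> 'o \<Rightarrow> 'm set" where
  "hom C X Y = {f \<in> Mor C. Dom C f = X \<and> Cod C f = Y}"

definition category :: "('o,'m,'x) cat_scheme \<Rightarrow> bool" where
  "category C \<longleftrightarrow>
     (\<forall>f\<in>Mor C. Dom C f \<in> Obj C \<and> Cod C f \<in> Obj C) \<and>
     (\<forall>X\<in>Obj C. Idm C X \<in> hom C X X) \<and>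
     (\<forall>f g. f \<in> Mor C \<and> g \<in> Mor C \<and> Cod C f = Dom C g \<longrightarrow>
            Comp C g f \<in> hom C (Dom C f) (Cod C g)) \<and>
     (\<forall>f\<in>Mor C. Comp C (Idm C (Cod C f)) f = f \<and> Comp C f (Idm C (Dom C f)) = f) \<and>
     (\<forall>f g h. f \<in> Mor C \<and> g \<in> Mor C \<and> h \<in> Mor C \<and> Cod C f = Dom C g \<and> Cod C g = Dom C h
            \<longrightarrow> Comp C h (Comp C g f) = Comp C (Comp C h g) f)"

definition is_functor :: "('o,'m,'x) cat_scheme \<Rightarrow> ('p,'n,'y) cat_scheme \<Rightarrow>
    ('o \<Rightarrow> 'p) \<Rightarrow> ('m \<Rightarrow> 'n) \<Rightarrow> bool" where
  "is_functor C D Fo Fm \<longleftrightarrow> category C \<and> category D \<and>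
     (\<forall>X\<in>Obj C. Fo X \<in> Obj D) \<and>
     (\<forall>f\<in>Mor C. Fm f \<in> hom D (Fo (Dom C f)) (Fo (Cod C f))) \<and>
     (\<forall>X\<in>Obj C. Fm (Idm C X) = Idm D (Fo X)) \<and>
     (\<forall>f g. f \<in> Mor C \<and> g \<in> Mor C \<and> Cod C f = Dom C g \<longrightarrow>
            Fm (Comp C g f) = Comp D (Fm g) (Fm f))"

definition is_iso :: "('o,'m,'x) cat_scheme \<Rightarrow> 'm \<Rightarrow> bool" where
  "is_iso C f \<longleftrightarrow> f \<in> Mor C \<and>
     (\<exists>g\<in>hom C (Cod C f) (Dom C f). Comp C g f = Idm C (Dom C f) \<and> Comp C f g = Idm C (Cod C f))"

definition nat_iso :: "('o,'m,'x) cat_scheme \<Rightarrow> ('p,'n,'y) cat_scheme \<Rightarrow>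
    ('o \<Rightarrow> 'p) \<Rightarrow> ('m \<Rightarrow> 'n) \<Rightarrow> ('o \<Rightarrow> 'p) \<Rightarrow> ('m \<Rightarrow> 'n) \<Rightarrow> ('o \<Rightarrow> 'n) \<Rightarrow> bool" where
  "nat_iso C D Fo Fm Go Gm \<eta> \<longleftrightarrow> is_functor C D Fo Fm \<and> is_functor C D Go Gm \<and>
     (\<forall>X\<in>Obj C. \<eta> X \<in> hom D (Fo X) (Go X) \<and> is_iso D (\<eta> X)) \<and>
     (\<forall>f\<in>Mor C. Comp D (\<eta> (Cod C f)) (Fm f) = Comp D (Gm f) (\<eta> (Dom C f)))"

definition equivalence :: "('o,'m,'x) cat_scheme \<Rightarrow> ('p,'n,'y) cat_scheme \<Rightarrow>
    ('o \<Rightarrow> 'p) \<Rightarrow> ('m \<Rightarrow> 'n) \<Rightarrow> bool" where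
  "equivalence C D Fo Fm \<longleftrightarrow> is_functor C D Fo Fm \<and>
     (\<exists>(Go :: 'p \<Rightarrow> 'o) (Gm :: 'n \<Rightarrow> 'm) \<eta> \<epsilon>. is_functor D C Go Gm \<and>
        nat_iso C C (\<lambda>X. X) (\<lambda>f. f) (Go \<circ> Fo) (Gm \<circ> Fm) \<eta> \<and>
        nat_iso D D (Fo \<circ> Go) (Fm \<circ> Gm) (\<lambda>X. X) (\<lambda>f. f) \<epsilon>)"

text \<open>\<open>\<omega>\<close> is modelled by \<open>nat\<close>; \<open>\<M>\<close> = injective functions \<open>nat \<Rightarrow> nat\<close>.
  \<open>act_ob u X = u\<^sub>*X\<close>; \<open>act_mor v u f : u\<^sub>*X \<rightarrow> v\<^sub>*Y\<close> for \<open>f : X \<rightarrow> Y\<close> is the action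
  functor \<open>E\<M> \<times> \<C> \<rightarrow> \<C>\<close> on the morphism \<open>(u \<rightarrow> v, f)\<close>; thus \<open>u\<^sub>* f = act_mor u u f\<close>
  and \<open>[v,u]\<^sub>X = act_mor v u (id X)\<close>.\<close>

record ('o,'m) pcat = "('o,'m) cat" +
  act_ob   :: "(nat \<Rightarrow> nat) \<Rightarrow> 'o \<Rightarrow> 'o"
  act_mor  :: "(nat \<Rightarrow> nat) \<Rightarrow> (nat \<Rightarrow> nat) \<Rightarrow> 'm \<Rightarrow> 'm"
  pzero    :: "'o"
  pplus_ob :: "'o \<Rightarrow> 'o \<Rightarrow> 'o"
  pplus_mor :: "'m \<Rightarrow> 'm \<Rightarrow> 'm"

definition EM_category :: "('o,'m,'x) pcat_scheme \<Rightarrow> bool" where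
  "EM_category C \<longleftrightarrow> category C \<and>
     (\<forall>u X. inj u \<and> X \<in> Obj C \<longrightarrow> act_ob C u X \<in> Obj C) \<and>
     (\<forall>u v f. inj u \<and> inj v \<and> f \<in> Mor C \<longrightarrow>
        act_mor C v u f \<in> hom C (act_ob C u (Dom C f)) (act_ob C v (Cod C f))) \<and>
     (\<forall>u X. inj u \<and> X \<in> Obj C \<longrightarrow> act_mor C u u (Idm C X) = Idm C (act_ob C u X)) \<and>
     (\<forall>u v w f g. inj u \<and> inj v \<and> inj w \<and> f \<in> Mor C \<and> g \<in> Mor C \<and> Cod C f = Dom C g \<longrightarrow>
        Comp C (act_mor C w v g) (act_mor C v u f) = act_mor C w u (Comp C g f)) \<and>
     (\<forall>X\<in>Obj C. act_ob C id X = X) \<and>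
     (\<forall>u v X. inj u \<and> inj v \<and> X \<in> Obj C \<longrightarrow> act_ob C v (act_ob C u X) = act_ob C (v \<circ> u) X) \<and>
     (\<forall>f\<in>Mor C. act_mor C id id f = f) \<and>
     (\<forall>u u' v v' f. inj u \<and> inj u' \<and> inj v \<and> inj v' \<and> f \<in> Mor C \<longrightarrow>
        act_mor C v' v (act_mor C u' u f) = act_mor C (v' \<circ> u') (v \<circ> u) f)"

definition supported_on :: "('o,'m,'x) pcat_scheme \<Rightarrow> 'o \<Rightarrow> nat set \<Rightarrow> bool" where
  "supported_on C X A \<longleftrightarrow> (\<forall>u. inj u \<and> (\<forall>a\<in>A. u a = a) \<longrightarrow> act_ob C u X = X)"

definition supp :: "('o,'m,'x) pcat_scheme \<Rightarrow> 'o \<Rightarrow> nat set" where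
  "supp C X = \<Inter>{A. finite A \<and> supported_on C X A}"

definition disj_ob :: "('o,'m,'x) pcat_scheme \<Rightarrow> 'o \<Rightarrow> 'o \<Rightarrow> bool" where
  "disj_ob C X Y \<longleftrightarrow> X \<in> Obj C \<and> Y \<in> Obj C \<and> supp C X \<inter> supp C Y = {}"

definition disj_mor :: "('o,'m,'x) pcat_scheme \<Rightarrow> 'm \<Rightarrow> 'm \<Rightarrow> bool" where
  "disj_mor C f g \<longleftrightarrow> f \<in> Mor C \<and> g \<in> Mor C \<and>
     disj_ob C (Dom C f) (Dom C g) \<and> disj_ob C (Cod C f) (Cod C g)"

definition parsummable :: "('o,'m,'x) pcat_scheme \<Rightarrow> bool" where
  "parsummable C \<longleftrightarrow> EM_category C \<and>
     (\<forall>X\<in>Obj C. \<exists>A. finite A \<and> supported_on C X A) \<and>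
     pzero C \<in> Obj C \<and> supp C (pzero C) = {} \<and>
     \<comment> \<open>\<open>+\<close> is a functor \<open>\<C> \<boxtimes> \<C> \<rightarrow> \<C>\<close>\<close>
     (\<forall>X Y. disj_ob C X Y \<longrightarrow> pplus_ob C X Y \<in> Obj C) \<and>
     (\<forall>f g. disj_mor C f g \<longrightarrow> pplus_mor C f g \<in>
        hom C (pplus_ob C (Dom C f) (Dom C g)) (pplus_ob C (Cod C f) (Cod C g))) \<and>
     (\<forall>X Y. disj_ob C X Y \<longrightarrow> pplus_mor C (Idm C X) (Idm C Y) = Idm C (pplus_ob C X Y)) \<and>
     (\<forall>f g f' g'. disj_mor C f g \<and> disj_mor C f' g' \<and> Cod C f = Dom C f' \<and> Cod C g = Dom C g' \<longrightarrow>
        pplus_mor C (Comp C f' f) (Comp C g' g) = Comp C (pplus_mor C f' g') (pplus_mor C f g)) \<and>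
     \<comment> \<open>strictly unital\<close>
     (\<forall>X\<in>Obj C. pplus_ob C X (pzero C) = X \<and> pplus_ob C (pzero C) X = X) \<and>
     (\<forall>f\<in>Mor C. pplus_mor C f (Idm C (pzero C)) = f \<and> pplus_mor C (Idm C (pzero C)) f = f) \<and>
     \<comment> \<open>associative\<close>
     (\<forall>X Y Z. disj_ob C X Y \<and> disj_ob C X Z \<and> disj_ob C Y Z \<longrightarrow>
        pplus_ob C (pplus_ob C X Y) Z = pplus_ob C X (pplus_ob C Y Z)) \<and>
     (\<forall>f g h. disj_mor C f g \<and> disj_mor C f h \<and> disj_mor C g h \<longrightarrow>
        pplus_mor C (pplus_mor C f g) h = pplus_mor C f (pplus_mor C g h)) \<and>
     \<comment> \<open>commutative\<close>
     (\<forall>X Y. disj_ob C X Y \<longrightarrow> pplus_ob C X Y = pplus_ob C Y X) \<and>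
     (\<forall>f g. disj_mor C f g \<longrightarrow> pplus_mor C f g = pplus_mor C g f) \<and>
     \<comment> \<open>\<open>E\<M>\<close>-equivariant\<close>
     (\<forall>u X Y. inj u \<and> disj_ob C X Y \<longrightarrow>
        act_ob C u (pplus_ob C X Y) = pplus_ob C (act_ob C u X) (act_ob C u Y)) \<and>
     (\<forall>u v f g. inj u \<and> inj v \<and> disj_mor C f g \<longrightarrow>
        act_mor C v u (pplus_mor C f g) = pplus_mor C (act_mor C v u f) (act_mor C v u g))"

definition pmorph :: "('o,'m,'x) pcat_scheme \<Rightarrow> ('p,'n,'y) pcat_scheme \<Rightarrow>
    ('o \<Rightarrow> 'p) \<Rightarrow> ('m \<Rightarrow> 'n) \<Rightarrow> bool" where
  "pmorph C D Fo Fm \<longleftrightarrow> parsummable C \<and> parsummable D \<and> is_functor C D Fo Fm \<and>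
     (\<forall>u X. inj u \<and> X \<in> Obj C \<longrightarrow> Fo (act_ob C u X) = act_ob D u (Fo X)) \<and>
     (\<forall>u v f. inj u \<and> inj v \<and> f \<in> Mor C \<longrightarrow> Fm (act_mor C v u f) = act_mor D v u (Fm f)) \<and>
     Fo (pzero C) = pzero D \<and>
     (\<forall>X Y. disj_ob C X Y \<longrightarrow> Fo (pplus_ob C X Y) = pplus_ob D (Fo X) (Fo Y)) \<and>
     (\<forall>f g. disj_mor C f g \<longrightarrow> Fm (pplus_mor C f g) = pplus_mor D (Fm f) (Fm g))"

text \<open>Sum-preserving functors of underlying categories (functoriality is stated separately).\<close>
definition preserves_sums :: "('o,'m,'x) pcat_scheme \<Rightarrow> ('p,'n,'y) pcat_scheme \<Rightarrow>
    ('o \<Rightarrow> 'p) \<Rightarrow> ('m \<Rightarrow> 'n) \<Rightarrow> bool" where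
  "preserves_sums C D Fo Fm \<longleftrightarrow>
     Fo (pzero C) = pzero D \<and>
     (\<forall>X Y. disj_ob C X Y \<longrightarrow> disj_ob D (Fo X) (Fo Y)) \<and>
     (\<forall>X Y. disj_ob C X Y \<longrightarrow> Fo (pplus_ob C X Y) = pplus_ob D (Fo X) (Fo Y)) \<and>
     (\<forall>f g. disj_mor C f g \<longrightarrow> Fm (pplus_mor C f g) = pplus_mor D (Fm f) (Fm g))"

definition prod_pcat :: "('o,'m,'x) pcat_scheme \<Rightarrow> ('p,'n,'y) pcat_scheme \<Rightarrow> ('o \<times> 'p, 'm \<times> 'n) pcat" where
  "prod_pcat C D = \<lparr>
     Obj = Obj C \<times> Obj D,
     Mor = Mor C \<times> Mor D,
     Dom = (\<lambda>(f,g). (Dom C f, Dom D g)),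
     Cod = (\<lambda>(f,g). (Cod C f, Cod D g)),
     Idm = (\<lambda>(X,Y). (Idm C X, Idm D Y)),
     Comp = (\<lambda>(f',g') (f,g). (Comp C f' f, Comp D g' g)),
     act_ob = (\<lambda>u (X,Y). (act_ob C u X, act_ob D u Y)),
     act_mor = (\<lambda>v u (f,g). (act_mor C v u f, act_mor D v u g)),
     pzero = (pzero C, pzero D),
     pplus_ob = (\<lambda>(X,Y) (X',Y'). (pplus_ob C X X', pplus_ob D Y Y')),
     pplus_mor = (\<lambda>(f,g) (f',g'). (pplus_mor C f f', pplus_mor D g g')) \<rparr>"

text \<open>The parsummable category \<open>G\<^sub>*\<C>\<close>; a morphism \<open>X \<rightarrow> Y\<close> is a triple \<open>(X, Y, d)\<close>
  with \<open>d \<in> Hom\<^sub>\<D>(GX, GY)\<close>. The action on morphisms is \<open>(v\<^sub>\<circ>\<^sup>Y) \<circ> d \<circ> (u\<^sub>\<circ>\<^sup>X)\<^sup>-\<^sup>1\<close>,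
  expressed with the structure isomorphisms \<open>G(u\<^sub>\<circ>\<^sup>X) = G([u,1]\<^sub>X)\<close> and their inverses
  \<open>G([1,u]\<^sub>X)\<close>.\<close>
definition push_pcat :: "('o,'m,'x) pcat_scheme \<Rightarrow> ('p,'n,'y) pcat_scheme \<Rightarrow>
    ('o \<Rightarrow> 'p) \<Rightarrow> ('m \<Rightarrow> 'n) \<Rightarrow> ('o, 'o \<times> 'o \<times> 'n) pcat" where
  "push_pcat C D Go Gm = \<lparr>
     Obj = Obj C,
     Mor = {(X, Y, d). X \<in> Obj C \<and> Y \<in> Obj C \<and> d \<in> hom D (Go X) (Go Y)},
     Dom = (\<lambda>(X, Y, d). X),
     Cod = (\<lambda>(X, Y, d). Y),
     Idm = (\<lambda>X. (X, X, Idm D (Go X))),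
     Comp = (\<lambda>(Y', Z, e) (X, Y, d). (X, Z, Comp D e d)),
     act_ob = act_ob C,
     act_mor = (\<lambda>v u (X, Y, d). (act_ob C u X, act_ob C v Y,
        Comp D (Gm (act_mor C v id (Idm C Y))) (Comp D d (Gm (act_mor C id u (Idm C X)))))),
     pzero = pzero C,
     pplus_ob = pplus_ob C,
     pplus_mor = (\<lambda>(X, Y, d) (X', Y', d'). (pplus_ob C X X', pplus_ob C Y Y', pplus_mor D d d')) \<rparr>"

text \<open>The functor \<open>I : \<C> \<rightarrow> G\<^sub>*\<C>\<close> on morphisms (identity on objects).\<close>
definition push_I :: "('o,'m,'x) pcat_scheme \<Rightarrow> ('m \<Rightarrow> 'n) \<Rightarrow> 'm \<Rightarrow> 'o \<times> 'o \<times> 'n" where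
  "push_I C Gm f = (Dom C f, Cod C f, Gm f)"

text \<open>\<open>\<mu> : 2 \<times> \<omega> \<rightarrow> \<omega>\<close> with \<open>2 = {0,1}\<close>; \<open>\<mu>\<^sub>* (X, Y) = \<mu>(0,-)\<^sub>*X + \<mu>(1,-)\<^sub>*Y\<close>.\<close>
definition mu_ob :: "('p,'n,'y) pcat_scheme \<Rightarrow> (nat \<times> nat \<Rightarrow> nat) \<Rightarrow> 'p \<times> 'p \<Rightarrow> 'p" where
  "mu_ob D mu = (\<lambda>(X, Y). pplus_ob D (act_ob D (\<lambda>n. mu (0, n)) X) (act_ob D (\<lambda>n. mu (1, n)) Y))"

definition mu_mor :: "('p,'n,'y) pcat_scheme \<Rightarrow> (nat \<times> nat \<Rightarrow> nat) \<Rightarrow> 'n \<times> 'n \<Rightarrow> 'n" where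
  "mu_mor D mu = (\<lambda>(f, g). pplus_mor D (act_mor D (\<lambda>n. mu (0, n)) (\<lambda>n. mu (0, n)) f)
                                       (act_mor D (\<lambda>n. mu (1, n)) (\<lambda>n. mu (1, n)) g))"

definition Fmu_ob :: "('p,'n,'y) pcat_scheme \<Rightarrow> (nat \<times> nat \<Rightarrow> nat) \<Rightarrow> ('o \<Rightarrow> 'p) \<Rightarrow> 'o \<times> 'p \<Rightarrow> 'p" where
  "Fmu_ob D mu Fo = (\<lambda>(X, Y). mu_ob D mu (Fo X, Y))"

definition Fmu_mor :: "('p,'n,'y) pcat_scheme \<Rightarrow> (nat \<times> nat \<Rightarrow> nat) \<Rightarrow> ('m \<Rightarrow> 'n) \<Rightarrow> 'm \<times> 'n \<Rightarrow> 'n" where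
  "Fmu_mor D mu Fm = (\<lambda>(f, g). mu_mor D mu (Fm f, g))"

definition Cyl :: "('o,'m,'x) pcat_scheme \<Rightarrow> ('p,'n,'y) pcat_scheme \<Rightarrow> (nat \<times> nat \<Rightarrow> nat) \<Rightarrow>
    ('o \<Rightarrow> 'p) \<Rightarrow> ('m \<Rightarrow> 'n) \<Rightarrow> ('o \<times> 'p, ('o \<times> 'p) \<times> ('o \<times> 'p) \<times> 'n) pcat" where
  "Cyl C D mu Fo Fm = push_pcat (prod_pcat C D) D (Fmu_ob D mu Fo) (Fmu_mor D mu Fm)"

definition I1_ob :: "('p,'n,'y) pcat_scheme \<Rightarrow> 'o \<Rightarrow> 'o \<times> 'p" where
  "I1_ob D X = (X, pzero D)"

definition I1_mor :: "('o,'m,'x) pcat_scheme \<Rightarrow> ('p,'n,'y) pcat_scheme \<Rightarrow> (nat \<times> nat \<Rightarrow> nat) \<Rightarrow>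
    ('m \<Rightarrow> 'n) \<Rightarrow> 'm \<Rightarrow> ('o \<times> 'p) \<times> ('o \<times> 'p) \<times> 'n" where
  "I1_mor C D mu Fm f = push_I (prod_pcat C D) (Fmu_mor D mu Fm) (f, Idm D (pzero D))"

definition I2_ob :: "('o,'m,'x) pcat_scheme \<Rightarrow> 'p \<Rightarrow> 'o \<times> 'p" where
  "I2_ob C Y = (pzero C, Y)"

definition I2_mor :: "('o,'m,'x) pcat_scheme \<Rightarrow> ('p,'n,'y) pcat_scheme \<Rightarrow> (nat \<times> nat \<Rightarrow> nat) \<Rightarrow>
    ('m \<Rightarrow> 'n) \<Rightarrow> 'n \<Rightarrow> ('o \<times> 'p) \<times> ('o \<times> 'p) \<times> 'n" where
  "I2_mor C D mu Fm g = push_I (prod_pcat C D) (Fmu_mor D mu Fm) (Idm C (pzero C), g)"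

end

theory Submission
  imports Defs "HOL-Library.Countable_Set"
begin

text \<open>
  \<open>Cyl(F)\<close> is the pushforward of \<open>\<C> \<times> \<D>\<close> along \<open>F\<^sub>\<mu>\<close>, and pushing forward along any
  sum-preserving functor yields a parsummable category.  \<open>F\<^sub>\<mu>\<close> preserves sums because
  \<open>\<mu>(0,-)\<close> and \<open>\<mu>(1,-)\<close> have disjoint images, so the two summands of \<open>F\<^sub>\<mu>(X, Y)\<close> are
  disjointly supported and the sum may be rearranged.  The inclusions \<open>I\<^sup>(\<^sup>1\<^sup>)\<close> and \<open>I\<^sup>(\<^sup>2\<^sup>)\<close>
  are \<open>(-, 0)\<close> resp. \<open>(0, -)\<close> followed by \<open>I\<close>; they are strictly equivariant because every
  structure isomorphism \<open>[v,u]\<close> of the zero object is an identity.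

  The functor \<open>Cyl(F) \<rightarrow> \<D>\<close>, \<open>(P, Q, d) \<mapsto> d\<close>, is fully faithful, so a functor into \<open>Cyl(F)\<close>
  is an equivalence once its composite with it is.  For \<open>I\<^sup>(\<^sup>2\<^sup>)\<close> this composite is
  \<open>\<mu>(1,-)\<^sub>*\<close>, isomorphic to the identity via the structure isomorphisms; for \<open>I\<^sup>(\<^sup>1\<^sup>)\<close> it is
  \<open>\<mu>(0,-)\<^sub>* \<circ> F \<cong> F\<close>.
\<close>

lemma categoryD:
  assumes "category C"
  shows cat_dom: "f \<in> Mor C \<Longrightarrow> Dom C f \<in> Obj C"
    and cat_cod: "f \<in> Mor C \<Longrightarrow> Cod C f \<in> Obj C"
    and cat_id_mor: "X \<in> Obj C \<Longrightarrow> Idm C X \<in> Mor C"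
    and cat_id_dom: "X \<in> Obj C \<Longrightarrow> Dom C (Idm C X) = X"
    and cat_id_cod: "X \<in> Obj C \<Longrightarrow> Cod C (Idm C X) = X"
    and cat_comp_mor: "f \<in> Mor C \<Longrightarrow> g \<in> Mor C \<Longrightarrow> Cod C f = Dom C g \<Longrightarrow> Comp C g f \<in> Mor C"
    and cat_comp_dom: "f \<in> Mor C \<Longrightarrow> g \<in> Mor C \<Longrightarrow> Cod C f = Dom C g \<Longrightarrow> Dom C (Comp C g f) = Dom C f"
    and cat_comp_cod: "f \<in> Mor C \<Longrightarrow> g \<in> Mor C \<Longrightarrow> Cod C f = Dom C g \<Longrightarrow> Cod C (Comp C g f) = Cod C g"
    and cat_idl: "f \<in> Mor C \<Longrightarrow> Comp C (Idm C (Cod C f)) f = f"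
    and cat_idr: "f \<in> Mor C \<Longrightarrow> Comp C f (Idm C (Dom C f)) = f"
    and cat_assoc: "f \<in> Mor C \<Longrightarrow> g \<in> Mor C \<Longrightarrow> h \<in> Mor C \<Longrightarrow> Cod C f = Dom C g \<Longrightarrow> Cod C g = Dom C h
            \<Longrightarrow> Comp C h (Comp C g f) = Comp C (Comp C h g) f"
  using assms unfolding category_def hom_def by blast+

lemma functorD:
  assumes "is_functor A B Fo Fm"
  shows functor_cat_src: "category A" and functor_cat_tgt: "category B"
    and functor_ob: "X \<in> Obj A \<Longrightarrow> Fo X \<in> Obj B"
    and functor_mor: "f \<in> Mor A \<Longrightarrow> Fm f \<in> Mor B"
    and functor_dom: "f \<in> Mor A \<Longrightarrow> Dom B (Fm f) = Fo (Dom A f)"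
    and functor_cod: "f \<in> Mor A \<Longrightarrow> Cod B (Fm f) = Fo (Cod A f)"
    and functor_id: "X \<in> Obj A \<Longrightarrow> Fm (Idm A X) = Idm B (Fo X)"
    and functor_comp: "f \<in> Mor A \<Longrightarrow> g \<in> Mor A \<Longrightarrow> Cod A f = Dom A g \<Longrightarrow> Fm (Comp A g f) = Comp B (Fm g) (Fm f)"
  using assms unfolding is_functor_def hom_def by blast+

lemma is_functor_identity: "category A \<Longrightarrow> is_functor A A (\<lambda>X. X) (\<lambda>f. f)"
  unfolding is_functor_def hom_def by (auto simp: cat_dom cat_cod)

lemma is_functor_compose:
  assumes "is_functor A B F1 F1m" and "is_functor B C F2 F2m"
  shows "is_functor A C (F2 \<circ> F1) (F2m \<circ> F1m)"
  unfolding is_functor_def hom_def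
  using functorD[OF assms(1)] functorD[OF assms(2)] by (auto simp: cat_dom cat_cod cat_comp_mor)

lemma is_functor_cong:
  assumes "is_functor A B Fo Fm"
    and "\<And>X. X \<in> Obj A \<Longrightarrow> Fo' X = Fo X" and "\<And>f. f \<in> Mor A \<Longrightarrow> Fm' f = Fm f"
  shows "is_functor A B Fo' Fm'"
  using assms unfolding is_functor_def hom_def by (simp add: cat_dom cat_cod cat_comp_mor cat_id_mor)

lemma is_isoI:
  assumes "category A" "f \<in> Mor A" "g \<in> Mor A" "Dom A g = Cod A f" "Cod A g = Dom A f"
    "Comp A g f = Idm A (Dom A f)" "Comp A f g = Idm A (Cod A f)"
  shows "is_iso A f"
  unfolding is_iso_def hom_def using assms by blast

lemma is_isoE:
  assumes "is_iso A f"
  obtains g where "f \<in> Mor A" "g \<in> Mor A" "Dom A g = Cod A f" "Cod A g = Dom A f"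
    "Comp A g f = Idm A (Dom A f)" "Comp A f g = Idm A (Cod A f)"
  using assms unfolding is_iso_def hom_def by blast

lemma functor_is_iso:
  assumes F: "is_functor A B Fo Fm" and "is_iso A f"
  shows "is_iso B (Fm f)"
proof -
  obtain g where g: "f \<in> Mor A" "g \<in> Mor A" "Dom A g = Cod A f" "Cod A g = Dom A f"
    "Comp A g f = Idm A (Dom A f)" "Comp A f g = Idm A (Cod A f)"
    using is_isoE[OF \<open>is_iso A f\<close>] by blast
  have A: "category A" by (rule functor_cat_src[OF F])
  have "Comp B (Fm g) (Fm f) = Idm B (Dom B (Fm f))"
    using functor_comp[OF F g(1) g(2)] g functor_id[OF F cat_dom[OF A g(1)]] functor_dom[OF F g(1)] by simp
  moreover have "Comp B (Fm f) (Fm g) = Idm B (Cod B (Fm f))"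
    using functor_comp[OF F g(2) g(1)] g functor_id[OF F cat_cod[OF A g(1)]] functor_cod[OF F g(1)] by simp
  ultimately show ?thesis
    using is_isoI[OF functor_cat_tgt[OF F] functor_mor[OF F g(1)] functor_mor[OF F g(2)]]
      g functor_dom[OF F] functor_cod[OF F] by simp
qed

lemma is_iso_comp:
  assumes A: "category A" and f: "is_iso A f" and g: "is_iso A g" and fg: "Cod A f = Dom A g"
  shows "is_iso A (Comp A g f)"
proof -
  obtain f' where f': "f \<in> Mor A" "f' \<in> Mor A" "Dom A f' = Cod A f" "Cod A f' = Dom A f"
    "Comp A f' f = Idm A (Dom A f)" "Comp A f f' = Idm A (Cod A f)" using is_isoE[OF f] by blast
  obtain g' where g': "g \<in> Mor A" "g' \<in> Mor A" "Dom A g' = Cod A g" "Cod A g' = Dom A g"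
    "Comp A g' g = Idm A (Dom A g)" "Comp A g g' = Idm A (Cod A g)" using is_isoE[OF g] by blast
  have "Comp A (Comp A f' g') (Comp A g f) = Comp A f' (Comp A g' (Comp A g f))"
    using cat_assoc[OF A, of "Comp A g f" g' f'] f' g' fg
    by (simp add: cat_comp_mor[OF A] cat_comp_cod[OF A])
  also have "Comp A g' (Comp A g f) = f"
    using cat_assoc[OF A, of f g g'] f' g' fg cat_idl[OF A f'(1)] by simp
  finally have left: "Comp A (Comp A f' g') (Comp A g f) = Idm A (Dom A (Comp A g f))"
    using f' g' fg by (simp add: cat_comp_dom[OF A])
  have "Comp A (Comp A g f) (Comp A f' g') = Comp A g (Comp A f (Comp A f' g'))"
    using cat_assoc[OF A, of "Comp A f' g'" f g] f' g' fg
    by (simp add: cat_comp_mor[OF A] cat_comp_cod[OF A])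
  also have "Comp A f (Comp A f' g') = g'"
    using cat_assoc[OF A, of g' f' f] f' g' fg cat_idl[OF A g'(2)] by simp
  finally have right: "Comp A (Comp A g f) (Comp A f' g') = Idm A (Cod A (Comp A g f))"
    using f' g' fg by (simp add: cat_comp_cod[OF A])
  show ?thesis
    by (rule is_isoI[OF A _ _ _ _ left right])
      (use f' g' fg in \<open>simp_all add: cat_comp_mor[OF A] cat_comp_dom[OF A] cat_comp_cod[OF A]\<close>)
qed

lemma is_iso_cancel_right:
  assumes A: "category A" and e: "is_iso A e"
    and a: "a \<in> Mor A" "Dom A a = Cod A e" and b: "b \<in> Mor A" "Dom A b = Cod A e"
    and eq: "Comp A a e = Comp A b e"
  shows "a = b"
proof -
  obtain e' where e': "e \<in> Mor A" "e' \<in> Mor A" "Dom A e' = Cod A e" "Cod A e' = Dom A e"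
    "Comp A e' e = Idm A (Dom A e)" "Comp A e e' = Idm A (Cod A e)" using is_isoE[OF e] by blast
  have "a = Comp A (Comp A a e) e'"
    using cat_assoc[OF A e'(2) e'(1) a(1)] cat_idr[OF A a(1)] a e' by simp
  also have "\<dots> = b"
    using cat_assoc[OF A e'(2) e'(1) b(1)] cat_idr[OF A b(1)] b e' eq by simp
  finally show ?thesis .
qed

lemma nat_isoD:
  assumes "nat_iso A B Fo Fm Go Gm \<eta>"
  shows nat_iso_src_functor: "is_functor A B Fo Fm"
    and nat_iso_tgt_functor: "is_functor A B Go Gm"
    and nat_iso_mor: "X \<in> Obj A \<Longrightarrow> \<eta> X \<in> Mor B"
    and nat_iso_dom: "X \<in> Obj A \<Longrightarrow> Dom B (\<eta> X) = Fo X"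
    and nat_iso_cod: "X \<in> Obj A \<Longrightarrow> Cod B (\<eta> X) = Go X"
    and nat_iso_is_iso: "X \<in> Obj A \<Longrightarrow> is_iso B (\<eta> X)"
    and nat_iso_natural: "f \<in> Mor A \<Longrightarrow> Comp B (\<eta> (Cod A f)) (Fm f) = Comp B (Gm f) (\<eta> (Dom A f))"
  using assms unfolding nat_iso_def hom_def by blast+

lemma nat_isoI:
  assumes "is_functor A B Fo Fm" and "is_functor A B Go Gm"
    and "\<And>X. X \<in> Obj A \<Longrightarrow> \<eta> X \<in> Mor B \<and> Dom B (\<eta> X) = Fo X \<and> Cod B (\<eta> X) = Go X \<and> is_iso B (\<eta> X)"
    and "\<And>f. f \<in> Mor A \<Longrightarrow> Comp B (\<eta> (Cod A f)) (Fm f) = Comp B (Gm f) (\<eta> (Dom A f))"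
  shows "nat_iso A B Fo Fm Go Gm \<eta>"
  using assms unfolding nat_iso_def hom_def by blast

lemma nat_iso_cong:
  assumes \<eta>: "nat_iso A B Fo Fm Go Gm \<eta>"
    and "\<And>X. X \<in> Obj A \<Longrightarrow> Fo' X = Fo X \<and> Go' X = Go X"
    and "\<And>f. f \<in> Mor A \<Longrightarrow> Fm' f = Fm f \<and> Gm' f = Gm f"
  shows "nat_iso A B Fo' Fm' Go' Gm' \<eta>"
proof (rule nat_isoI)
  show "is_functor A B Fo' Fm'" "is_functor A B Go' Gm'"
    using is_functor_cong[OF nat_iso_src_functor[OF \<eta>]] is_functor_cong[OF nat_iso_tgt_functor[OF \<eta>]]
      assms(2,3) by auto
qed (use assms nat_isoD[OF \<eta>] in \<open>auto simp: cat_dom cat_cod functor_cat_src[OF nat_iso_src_functor[OF \<eta>]]\<close>)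

lemma nat_iso_identity:
  assumes F: "is_functor A B Fo Fm"
  shows "nat_iso A B Fo Fm Fo Fm (\<lambda>X. Idm B (Fo X))"
proof (rule nat_isoI[OF F F])
  have B: "category B" by (rule functor_cat_tgt[OF F])
  fix X assume "X \<in> Obj A"
  then have FX: "Fo X \<in> Obj B" by (rule functor_ob[OF F])
  have "Comp B (Idm B (Fo X)) (Idm B (Fo X)) = Idm B (Fo X)"
    using cat_idl[OF B cat_id_mor[OF B FX]] cat_id_cod[OF B FX] by simp
  then show "Idm B (Fo X) \<in> Mor B \<and> Dom B (Idm B (Fo X)) = Fo X \<and> Cod B (Idm B (Fo X)) = Fo X
    \<and> is_iso B (Idm B (Fo X))"
    using is_isoI[OF B cat_id_mor[OF B FX] cat_id_mor[OF B FX]] cat_id_dom[OF B FX] cat_id_cod[OF B FX]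
    by (simp add: cat_id_mor[OF B FX])
next
  have B: "category B" by (rule functor_cat_tgt[OF F])
  show "Comp B (Idm B (Fo (Cod A f))) (Fm f) = Comp B (Fm f) (Idm B (Fo (Dom A f)))" if "f \<in> Mor A" for f
    using cat_idl[OF B functor_mor[OF F that]] cat_idr[OF B functor_mor[OF F that]] functorD[OF F] that by simp
qed

lemma nat_iso_vcomp:
  assumes \<eta>: "nat_iso A B Fo Fm Go Gm \<eta>" and \<theta>: "nat_iso A B Go Gm Ho Hm \<theta>"
  shows "nat_iso A B Fo Fm Ho Hm (\<lambda>X. Comp B (\<theta> X) (\<eta> X))"
proof (rule nat_isoI[OF nat_iso_src_functor[OF \<eta>] nat_iso_tgt_functor[OF \<theta>]])
  have A: "category A" and B: "category B" using functorD[OF nat_iso_src_functor[OF \<eta>]] by auto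
  note \<eta>D = nat_isoD[OF \<eta>] and \<theta>D = nat_isoD[OF \<theta>]
  show "Comp B (\<theta> X) (\<eta> X) \<in> Mor B \<and> Dom B (Comp B (\<theta> X) (\<eta> X)) = Fo X
    \<and> Cod B (Comp B (\<theta> X) (\<eta> X)) = Ho X \<and> is_iso B (Comp B (\<theta> X) (\<eta> X))" if X: "X \<in> Obj A" for X
    using \<eta>D(3-6)[OF X] \<theta>D(3-6)[OF X]
    by (simp add: cat_comp_mor[OF B] cat_comp_dom[OF B] cat_comp_cod[OF B] is_iso_comp[OF B])
  fix f assume f: "f \<in> Mor A"
  let ?X = "Dom A f" and ?Y = "Cod A f"
  have X: "?X \<in> Obj A" and Y: "?Y \<in> Obj A" using f by (auto simp: cat_dom[OF A] cat_cod[OF A])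
  note Ff = functorD(4-6)[OF nat_iso_src_functor[OF \<eta>] f]
    and Gf = functorD(4-6)[OF nat_iso_tgt_functor[OF \<eta>] f]
    and Hf = functorD(4-6)[OF nat_iso_tgt_functor[OF \<theta>] f]
  have "Comp B (Comp B (\<theta> ?Y) (\<eta> ?Y)) (Fm f) = Comp B (\<theta> ?Y) (Comp B (Gm f) (\<eta> ?X))"
    using cat_assoc[OF B Ff(1) \<eta>D(3)[OF Y] \<theta>D(3)[OF Y]] \<eta>D(3-5)[OF Y] \<theta>D(4)[OF Y] Ff \<eta>D(7)[OF f] by simp
  also have "\<dots> = Comp B (Comp B (\<theta> ?Y) (Gm f)) (\<eta> ?X)"
    using cat_assoc[OF B \<eta>D(3)[OF X] Gf(1) \<theta>D(3)[OF Y]] \<eta>D(5)[OF X] \<theta>D(4)[OF Y] Gf by simp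
  also have "\<dots> = Comp B (Hm f) (Comp B (\<theta> ?X) (\<eta> ?X))"
    using cat_assoc[OF B \<eta>D(3)[OF X] \<theta>D(3)[OF X] Hf(1)] \<eta>D(5)[OF X] \<theta>D(4,5)[OF X] Hf \<theta>D(7)[OF f]
    by simp
  finally show "Comp B (Comp B (\<theta> ?Y) (\<eta> ?Y)) (Fm f) = Comp B (Hm f) (Comp B (\<theta> ?X) (\<eta> ?X))" .
qed

lemma nat_iso_whisker_left:
  assumes \<eta>: "nat_iso A B Fo Fm Go Gm \<eta>" and K: "is_functor C A Ko Km"
  shows "nat_iso C B (Fo \<circ> Ko) (Fm \<circ> Km) (Go \<circ> Ko) (Gm \<circ> Km) (\<eta> \<circ> Ko)"
proof (rule nat_isoI)
  show "is_functor C B (Fo \<circ> Ko) (Fm \<circ> Km)" "is_functor C B (Go \<circ> Ko) (Gm \<circ> Km)"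
    using is_functor_compose[OF K] nat_isoD(1,2)[OF \<eta>] by auto
  show "(\<eta> \<circ> Ko) X \<in> Mor B \<and> Dom B ((\<eta> \<circ> Ko) X) = (Fo \<circ> Ko) X \<and> Cod B ((\<eta> \<circ> Ko) X) = (Go \<circ> Ko) X
    \<and> is_iso B ((\<eta> \<circ> Ko) X)" if "X \<in> Obj C" for X
    using nat_isoD(3-6)[OF \<eta> functor_ob[OF K that]] by simp
  show "Comp B ((\<eta> \<circ> Ko) (Cod C f)) ((Fm \<circ> Km) f) = Comp B ((Gm \<circ> Km) f) ((\<eta> \<circ> Ko) (Dom C f))"
    if "f \<in> Mor C" for f
    using nat_iso_natural[OF \<eta> functor_mor[OF K that]] functor_dom[OF K that] functor_cod[OF K that] by simp
qed

lemma nat_iso_whisker_right: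
  assumes \<eta>: "nat_iso A B Fo Fm Go Gm \<eta>" and K: "is_functor B C Ko Km"
  shows "nat_iso A C (Ko \<circ> Fo) (Km \<circ> Fm) (Ko \<circ> Go) (Km \<circ> Gm) (Km \<circ> \<eta>)"
proof (rule nat_isoI)
  show "is_functor A C (Ko \<circ> Fo) (Km \<circ> Fm)" "is_functor A C (Ko \<circ> Go) (Km \<circ> Gm)"
    using is_functor_compose[OF _ K] nat_isoD(1,2)[OF \<eta>] by auto
  have A: "category A" using functor_cat_src[OF nat_iso_src_functor[OF \<eta>]] .
  show "(Km \<circ> \<eta>) X \<in> Mor C \<and> Dom C ((Km \<circ> \<eta>) X) = (Ko \<circ> Fo) X \<and> Cod C ((Km \<circ> \<eta>) X) = (Ko \<circ> Go) X
    \<and> is_iso C ((Km \<circ> \<eta>) X)" if "X \<in> Obj A" for X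
    using nat_isoD(3-6)[OF \<eta> that] functorD(4-6)[OF K] functor_is_iso[OF K] by simp
  fix f assume f: "f \<in> Mor A"
  have X: "Dom A f \<in> Obj A" and Y: "Cod A f \<in> Obj A" using f by (auto simp: cat_dom[OF A] cat_cod[OF A])
  note Ff = functorD(4-6)[OF nat_iso_src_functor[OF \<eta>] f]
    and Gf = functorD(4-6)[OF nat_iso_tgt_functor[OF \<eta>] f]
  show "Comp C ((Km \<circ> \<eta>) (Cod A f)) ((Km \<circ> Fm) f) = Comp C ((Km \<circ> Gm) f) ((Km \<circ> \<eta>) (Dom A f))"
    using functor_comp[OF K Ff(1) nat_iso_mor[OF \<eta> Y]] functor_comp[OF K nat_iso_mor[OF \<eta> X] Gf(1)]
      nat_isoD(4,5)[OF \<eta> X] nat_isoD(4,5)[OF \<eta> Y] Ff Gf nat_iso_natural[OF \<eta> f] by simp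
qed

lemma equivalence_identity:
  assumes "category A"
  shows "equivalence A A (\<lambda>X. X) (\<lambda>f. f)"
  unfolding equivalence_def comp_def
  by (intro conjI is_functor_identity[OF assms] exI[of _ "\<lambda>X. X"] exI[of _ "\<lambda>f. f"] exI[of _ "Idm A"]
      nat_iso_identity[OF is_functor_identity[OF assms], simplified])

text \<open>Both directions of \<open>F \<cong> F'\<close> are assumed because \<open>nat_iso\<close> does not name the inverse
  transformation.\<close>
lemma equivalence_nat_iso:
  assumes F: "equivalence A B Fo Fm"
    and \<theta>: "nat_iso A B Fo Fm Fo' Fm' \<theta>" and \<theta>': "nat_iso A B Fo' Fm' Fo Fm \<theta>'"
  shows "equivalence A B Fo' Fm'"
proof -
  obtain Go Gm \<eta> \<epsilon> where G: "is_functor B A Go Gm"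
    and \<eta>: "nat_iso A A (\<lambda>X. X) (\<lambda>f. f) (Go \<circ> Fo) (Gm \<circ> Fm) \<eta>"
    and \<epsilon>: "nat_iso B B (Fo \<circ> Go) (Fm \<circ> Gm) (\<lambda>X. X) (\<lambda>f. f) \<epsilon>"
    using F unfolding equivalence_def by blast
  have "nat_iso A A (\<lambda>X. X) (\<lambda>f. f) (Go \<circ> Fo') (Gm \<circ> Fm') (\<lambda>X. Comp A ((Gm \<circ> \<theta>) X) (\<eta> X))"
    by (rule nat_iso_vcomp[OF \<eta> nat_iso_whisker_right[OF \<theta> G]])
  moreover have "nat_iso B B (Fo' \<circ> Go) (Fm' \<circ> Gm) (\<lambda>X. X) (\<lambda>f. f) (\<lambda>X. Comp B (\<epsilon> X) ((\<theta>' \<circ> Go) X))"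
    by (rule nat_iso_vcomp[OF nat_iso_whisker_left[OF \<theta>' G] \<epsilon>])
  ultimately show ?thesis
    unfolding equivalence_def using nat_iso_tgt_functor[OF \<theta>] G by blast
qed

lemma pmorph_compose:
  assumes F: "pmorph A B F1 F1m" and G: "pmorph B C F2 F2m"
    and disj: "\<And>X Y. disj_ob A X Y \<Longrightarrow> disj_ob B (F1 X) (F1 Y)"
  shows "pmorph A C (F2 \<circ> F1) (F2m \<circ> F1m)"
proof -
  have F1: "is_functor A B F1 F1m" and F2: "is_functor B C F2 F2m" using F G unfolding pmorph_def by auto
  have "disj_mor B (F1m f) (F1m g)" if "disj_mor A f g" for f g
    using that disj functorD[OF F1] unfolding disj_mor_def by simp
  then show ?thesis
    using F G is_functor_compose[OF F1 F2] functor_ob[OF F1] functor_mor[OF F1] disj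
    unfolding pmorph_def by (auto simp: disj_ob_def)
qed

section \<open>Parsummable categories and supports\<close>

lemma finite_inj_on_extends_to_bij:
  fixes h :: "nat \<Rightarrow> nat"
  assumes "finite K" "inj_on h K"
  obtains \<sigma> where "bij \<sigma>" "\<And>k. k \<in> K \<Longrightarrow> \<sigma> k = h k"
proof -
  have "infinite (- K)" "infinite (- (h ` K))"
    using assms(1) by (simp_all add: Finite_Set.finite_compl)
  then obtain e1 e2 :: "nat \<Rightarrow> nat" where e1: "bij_betw e1 (- K) UNIV" and e2: "bij_betw e2 (- (h ` K)) UNIV"
    by (meson countableE_infinite countableI_type)
  define g where "g = inv_into (- (h ` K)) e2 \<circ> e1"
  have g: "bij_betw g (- K) (- (h ` K))"
    unfolding g_def by (rule bij_betw_trans[OF e1 bij_betw_inv_into[OF e2]])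
  define \<sigma> where "\<sigma> = (\<lambda>n. if n \<in> K then h n else g n)"
  have "bij_betw \<sigma> K (h ` K)"
    using assms(2) unfolding \<sigma>_def by (simp add: bij_betw_def inj_on_def image_def)
  moreover have "bij_betw \<sigma> (- K) (- (h ` K))"
    using g by (rule bij_betw_cong[THEN iffD1, rotated]) (simp add: \<sigma>_def)
  ultimately have "bij_betw \<sigma> (K \<union> - K) (h ` K \<union> - (h ` K))"
    by (rule bij_betw_combine) blast
  then have "bij \<sigma>" by simp
  moreover have "\<sigma> k = h k" if "k \<in> K" for k using that by (simp add: \<sigma>_def)
  ultimately show ?thesis by (rule that)
qed

locale parsummable_cat =
  fixes C :: "('o,'m,'x) pcat_scheme"
  assumes parsummable: "parsummable C"
begin

lemma parsummableD:
  shows EM_category: "EM_category C"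
    and finite_support_exists: "X \<in> Obj C \<Longrightarrow> \<exists>A. finite A \<and> supported_on C X A"
    and pzero_in_Obj: "pzero C \<in> Obj C"
    and supp_pzero: "supp C (pzero C) = {}"
    and pplus_ob_in_Obj: "disj_ob C X Y \<Longrightarrow> pplus_ob C X Y \<in> Obj C"
    and pplus_mor_in_hom: "disj_mor C f g \<Longrightarrow>
      pplus_mor C f g \<in> hom C (pplus_ob C (Dom C f) (Dom C g)) (pplus_ob C (Cod C f) (Cod C g))"
    and pplus_mor_Idm: "disj_ob C X Y \<Longrightarrow> pplus_mor C (Idm C X) (Idm C Y) = Idm C (pplus_ob C X Y)"
    and pplus_mor_comp: "disj_mor C f g \<Longrightarrow> disj_mor C f' g' \<Longrightarrow> Cod C f = Dom C f' \<Longrightarrow> Cod C g = Dom C g' \<Longrightarrow>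
      pplus_mor C (Comp C f' f) (Comp C g' g) = Comp C (pplus_mor C f' g') (pplus_mor C f g)"
    and pplus_ob_pzero: "X \<in> Obj C \<Longrightarrow> pplus_ob C X (pzero C) = X"
    and pzero_pplus_ob: "X \<in> Obj C \<Longrightarrow> pplus_ob C (pzero C) X = X"
    and pplus_mor_pzero: "f \<in> Mor C \<Longrightarrow> pplus_mor C f (Idm C (pzero C)) = f"
    and pzero_pplus_mor: "f \<in> Mor C \<Longrightarrow> pplus_mor C (Idm C (pzero C)) f = f"
    and pplus_ob_assoc: "disj_ob C X Y \<Longrightarrow> disj_ob C X Z \<Longrightarrow> disj_ob C Y Z \<Longrightarrow>
      pplus_ob C (pplus_ob C X Y) Z = pplus_ob C X (pplus_ob C Y Z)"
    and pplus_mor_assoc: "disj_mor C f g \<Longrightarrow> disj_mor C f h \<Longrightarrow> disj_mor C g h \<Longrightarrow>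
      pplus_mor C (pplus_mor C f g) h = pplus_mor C f (pplus_mor C g h)"
    and act_ob_pplus_ob: "inj u \<Longrightarrow> disj_ob C X Y \<Longrightarrow>
      act_ob C u (pplus_ob C X Y) = pplus_ob C (act_ob C u X) (act_ob C u Y)"
    and act_mor_pplus_mor: "inj u \<Longrightarrow> inj v \<Longrightarrow> disj_mor C f g \<Longrightarrow>
      act_mor C v u (pplus_mor C f g) = pplus_mor C (act_mor C v u f) (act_mor C v u g)"
  using parsummable unfolding parsummable_def by simp_all

lemma pplus_ob_commute_axiom: "\<forall>X Y. disj_ob C X Y \<longrightarrow> pplus_ob C X Y = pplus_ob C Y X"
  using parsummable unfolding parsummable_def by (elim conjE) assumption

lemma pplus_mor_commute_axiom: "\<forall>f g. disj_mor C f g \<longrightarrow> pplus_mor C f g = pplus_mor C g f"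
  using parsummable unfolding parsummable_def by (elim conjE) assumption

lemmas pplus_ob_commute = pplus_ob_commute_axiom[rule_format]
  and pplus_mor_commute = pplus_mor_commute_axiom[rule_format]

lemma EM_categoryD:
  shows category: "category C"
    and act_ob_in_Obj: "inj u \<Longrightarrow> X \<in> Obj C \<Longrightarrow> act_ob C u X \<in> Obj C"
    and act_mor_in_hom: "inj u \<Longrightarrow> inj v \<Longrightarrow> f \<in> Mor C \<Longrightarrow>
      act_mor C v u f \<in> hom C (act_ob C u (Dom C f)) (act_ob C v (Cod C f))"
    and act_mor_Idm: "inj u \<Longrightarrow> X \<in> Obj C \<Longrightarrow> act_mor C u u (Idm C X) = Idm C (act_ob C u X)"
    and act_mor_comp: "inj u \<Longrightarrow> inj v \<Longrightarrow> inj w \<Longrightarrow> f \<in> Mor C \<Longrightarrow> g \<in> Mor C \<Longrightarrow> Cod C f = Dom C g \<Longrightarrow>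
      Comp C (act_mor C w v g) (act_mor C v u f) = act_mor C w u (Comp C g f)"
    and act_ob_id: "X \<in> Obj C \<Longrightarrow> act_ob C id X = X"
    and act_ob_act_ob: "inj u \<Longrightarrow> inj v \<Longrightarrow> X \<in> Obj C \<Longrightarrow> act_ob C v (act_ob C u X) = act_ob C (v \<circ> u) X"
    and act_mor_id: "f \<in> Mor C \<Longrightarrow> act_mor C id id f = f"
    and act_mor_act_mor: "inj u \<Longrightarrow> inj u' \<Longrightarrow> inj v \<Longrightarrow> inj v' \<Longrightarrow> f \<in> Mor C \<Longrightarrow>
      act_mor C v' v (act_mor C u' u f) = act_mor C (v' \<circ> u') (v \<circ> u) f"
  using EM_category unfolding EM_category_def by simp_all

lemmas dom_in_Obj = cat_dom[OF category] and cod_in_Obj = cat_cod[OF category]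
  and Idm_in_Mor = cat_id_mor[OF category] and dom_Idm = cat_id_dom[OF category]
  and cod_Idm = cat_id_cod[OF category] and comp_in_Mor = cat_comp_mor[OF category]
  and dom_comp = cat_comp_dom[OF category] and cod_comp = cat_comp_cod[OF category]
  and comp_Idm_left = cat_idl[OF category] and comp_Idm_right = cat_idr[OF category]
  and comp_assoc = cat_assoc[OF category]

lemma comp_Idm_Idm: "X \<in> Obj C \<Longrightarrow> Comp C (Idm C X) (Idm C X) = Idm C X"
  using comp_Idm_left[OF Idm_in_Mor] cod_Idm by simp

lemma act_morD:
  assumes "inj u" "inj v" "f \<in> Mor C"
  shows act_mor_in_Mor: "act_mor C v u f \<in> Mor C"
    and dom_act_mor: "Dom C (act_mor C v u f) = act_ob C u (Dom C f)"
    and cod_act_mor: "Cod C (act_mor C v u f) = act_ob C v (Cod C f)"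
  using act_mor_in_hom[OF assms] unfolding hom_def by auto

lemma pplus_morD:
  assumes "disj_mor C f g"
  shows pplus_mor_in_Mor: "pplus_mor C f g \<in> Mor C"
    and dom_pplus_mor: "Dom C (pplus_mor C f g) = pplus_ob C (Dom C f) (Dom C g)"
    and cod_pplus_mor: "Cod C (pplus_mor C f g) = pplus_ob C (Cod C f) (Cod C g)"
  using pplus_mor_in_hom[OF assms] unfolding hom_def by auto

end

lemma supp_subset_support: "finite A \<Longrightarrow> supported_on C X A \<Longrightarrow> supp C X \<subseteq> A"
  unfolding supp_def by (rule Inter_lower) simp

context parsummable_cat
begin

text \<open>Extend \<open>u\<close> on \<open>A\<close> to a bijection \<open>\<sigma>\<close>: then \<open>\<sigma>\<inverse> \<circ> u\<close> fixes \<open>A\<close>, so \<open>u\<^sub>*X = \<sigma>\<^sub>*X\<close>,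
  and likewise for \<open>v\<close>.\<close>
lemma act_ob_cong_support:
  assumes X: "X \<in> Obj C" and A: "finite A" "supported_on C X A"
    and u: "inj u" and v: "inj v" and uv: "\<And>a. a \<in> A \<Longrightarrow> u a = v a"
  shows "act_ob C u X = act_ob C v X"
proof -
  have through_bij: "act_ob C w X = act_ob C \<sigma> X"
    if w: "inj w" and \<sigma>: "bij \<sigma>" "\<And>a. a \<in> A \<Longrightarrow> \<sigma> a = w a" for w \<sigma>
  proof -
    have inj: "inj (inv \<sigma> \<circ> w)" using w \<sigma>(1) by (simp add: bij_imp_bij_inv bij_is_inj inj_compose)
    moreover have "(inv \<sigma> \<circ> w) a = a" if "a \<in> A" for a
      using \<sigma> that by (metis bij_inv_eq_iff comp_apply)
    ultimately have "act_ob C (inv \<sigma> \<circ> w) X = X" using A(2) unfolding supported_on_def by blast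
    moreover have "\<sigma> \<circ> (inv \<sigma> \<circ> w) = w" using \<sigma>(1) by (auto simp: bij_is_surj surj_f_inv_f)
    ultimately show ?thesis using act_ob_act_ob[OF inj bij_is_inj[OF \<sigma>(1)] X] by simp
  qed
  obtain \<sigma> where \<sigma>: "bij \<sigma>" "\<And>a. a \<in> A \<Longrightarrow> \<sigma> a = u a"
    using finite_inj_on_extends_to_bij[OF A(1), of u] u by (metis inj_on_subset subset_UNIV)
  show ?thesis using through_bij[OF u \<sigma>] through_bij[OF v \<sigma>(1)] \<sigma>(2) uv by simp
qed

lemma supported_on_act_ob:
  assumes X: "X \<in> Obj C" and A: "finite A" "supported_on C X A" and u: "inj u"
  shows "supported_on C (act_ob C u X) (u ` A)"
  unfolding supported_on_def
proof (intro allI impI)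
  fix w assume w: "inj w \<and> (\<forall>a\<in>u ` A. w a = a)"
  have "act_ob C w (act_ob C u X) = act_ob C (w \<circ> u) X" using act_ob_act_ob u w X by blast
  also have "\<dots> = act_ob C u X"
    by (rule act_ob_cong_support[OF X A]) (use w u in \<open>auto intro: inj_compose\<close>)
  finally show "act_ob C w (act_ob C u X) = act_ob C u X" .
qed

text \<open>An injection \<open>u\<close> fixing \<open>A \<inter> B\<close> is connected to the identity through injections that
  alternately agree on \<open>A\<close> and on \<open>B\<close>: first move everything outside \<open>A\<close> beyond the
  finitely many relevant values, then restore \<open>A\<close>.\<close>
lemma supported_on_Int:
  assumes X: "X \<in> Obj C" and A: "finite A" "supported_on C X A" and B: "finite B" "supported_on C X B"
  shows "supported_on C X (A \<inter> B)"
  unfolding supported_on_def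
proof (intro allI impI)
  fix u assume "inj u \<and> (\<forall>a\<in>A \<inter> B. u a = a)"
  then have u: "inj u" and u_fixes: "\<And>a. a \<in> A \<inter> B \<Longrightarrow> u a = a" by auto
  define M where "M = Suc (Max (A \<union> u ` A))"
  have below: "a < M" "u a < M" if "a \<in> A" for a
    unfolding M_def using Max_ge[of "A \<union> u ` A"] A(1) that by (simp_all add: le_imp_less_Suc)
  define s1 where "s1 = (\<lambda>n. if n \<in> A then u n else n + M)"
  define s2 where "s2 = (\<lambda>n. if n \<in> A then n else n + M)"
  have s1: "inj s1"
  proof (rule injI)
    fix x y assume "s1 x = s1 y"
    then show "x = y" using u unfolding s1_def
      by (cases "x \<in> A"; cases "y \<in> A") (auto simp: inj_eq dest: below(2))
  qed
  have s2: "inj s2"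
  proof (rule injI)
    fix x y assume "s2 x = s2 y"
    then show "x = y" unfolding s2_def
      by (cases "x \<in> A"; cases "y \<in> A") (auto dest: below(1))
  qed
  have "act_ob C u X = act_ob C s1 X"
    by (rule act_ob_cong_support[OF X A u s1]) (simp add: s1_def)
  also have "\<dots> = act_ob C s2 X"
    by (rule act_ob_cong_support[OF X B s1 s2]) (auto simp: s1_def s2_def u_fixes)
  also have "\<dots> = act_ob C id X"
    by (rule act_ob_cong_support[OF X A s2 inj_on_id]) (simp add: s2_def)
  finally show "act_ob C u X = X" using act_ob_id[OF X] by simp
qed

lemma supported_on_supp:
  assumes X: "X \<in> Obj C"
  shows "supported_on C X (supp C X)"
proof -
  obtain A0 where A0: "finite A0" "supported_on C X A0" using finite_support_exists[OF X] by blast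
  have "supported_on C X (A0 - K)" if "finite K" "K \<subseteq> A0 - supp C X" for K
    using that
  proof (induction K rule: finite_induct)
    case empty
    then show ?case using A0 by simp
  next
    case (insert a K)
    then have IH: "supported_on C X (A0 - K)" and "a \<notin> supp C X" by auto
    then obtain B where B: "finite B" "supported_on C X B" "a \<notin> B" unfolding supp_def by auto
    have "supported_on C X ((A0 - K) \<inter> B)" using supported_on_Int[OF X _ IH B(1,2)] A0(1) by simp
    then show ?case using B(3) unfolding supported_on_def by auto
  qed
  moreover have "supp C X \<subseteq> A0" using A0 by (rule supp_subset_support)
  then have "A0 - (A0 - supp C X) = supp C X" by blast
  ultimately show ?thesis using A0(1) by (metis finite_Diff order_refl)
qed

lemma finite_supp: "X \<in> Obj C \<Longrightarrow> finite (supp C X)"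
  using finite_support_exists[of X] by (metis finite_subset supp_subset_support)

lemma supp_act_ob_subset: "inj u \<Longrightarrow> X \<in> Obj C \<Longrightarrow> supp C (act_ob C u X) \<subseteq> u ` supp C X"
  by (simp add: supp_subset_support supported_on_act_ob supported_on_supp finite_supp)

lemma supp_pplus_ob_subset:
  assumes XY: "disj_ob C X Y"
  shows "supp C (pplus_ob C X Y) \<subseteq> supp C X \<union> supp C Y"
proof (rule supp_subset_support)
  have X: "X \<in> Obj C" and Y: "Y \<in> Obj C" using XY unfolding disj_ob_def by auto
  then show "finite (supp C X \<union> supp C Y)" by (simp add: finite_supp)
  show "supported_on C (pplus_ob C X Y) (supp C X \<union> supp C Y)"
    using supported_on_supp[OF X] supported_on_supp[OF Y] act_ob_pplus_ob[OF _ XY]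
    unfolding supported_on_def by simp
qed

lemma act_ob_pzero: "inj u \<Longrightarrow> act_ob C u (pzero C) = pzero C"
  using supported_on_supp[OF pzero_in_Obj] unfolding supp_pzero supported_on_def by simp

lemma disj_ob_sym: "disj_ob C X Y \<Longrightarrow> disj_ob C Y X"
  unfolding disj_ob_def by blast

lemma disj_ob_act_ob:
  assumes u: "inj u" and XY: "disj_ob C X Y"
  shows "disj_ob C (act_ob C u X) (act_ob C u Y)"
proof -
  have X: "X \<in> Obj C" and Y: "Y \<in> Obj C" and "supp C X \<inter> supp C Y = {}"
    using XY unfolding disj_ob_def by auto
  then have "u ` supp C X \<inter> u ` supp C Y = {}" using u by (simp add: image_Int[symmetric])
  then show ?thesis
    using supp_act_ob_subset[OF u X] supp_act_ob_subset[OF u Y] act_ob_in_Obj[OF u X] act_ob_in_Obj[OF u Y]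
    unfolding disj_ob_def by blast
qed

lemma disj_ob_pplus_ob_right:
  "disj_ob C X Y \<Longrightarrow> disj_ob C X Z \<Longrightarrow> disj_ob C Y Z \<Longrightarrow> disj_ob C X (pplus_ob C Y Z)"
  using supp_pplus_ob_subset pplus_ob_in_Obj unfolding disj_ob_def by blast

lemma disj_ob_pplus_ob_left:
  "disj_ob C X Z \<Longrightarrow> disj_ob C Y Z \<Longrightarrow> disj_ob C X Y \<Longrightarrow> disj_ob C (pplus_ob C X Y) Z"
  using disj_ob_sym disj_ob_pplus_ob_right by blast

lemma pplus_ob_swap_middle:
  assumes ab: "disj_ob C a b" and ac: "disj_ob C a c" and ad: "disj_ob C a d"
    and bc: "disj_ob C b c" and bd: "disj_ob C b d" and cd: "disj_ob C c d"
  shows "pplus_ob C (pplus_ob C a b) (pplus_ob C c d) = pplus_ob C (pplus_ob C a c) (pplus_ob C b d)"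
proof -
  note right = disj_ob_pplus_ob_right
  have "pplus_ob C (pplus_ob C a b) (pplus_ob C c d) = pplus_ob C a (pplus_ob C (pplus_ob C b c) d)"
    using pplus_ob_assoc[OF ab right[OF ac ad cd] right[OF bc bd cd]] pplus_ob_assoc[OF bc bd cd] by simp
  also have "\<dots> = pplus_ob C a (pplus_ob C c (pplus_ob C b d))"
    using pplus_ob_commute[OF bc] pplus_ob_assoc[OF disj_ob_sym[OF bc] cd bd] by simp
  also have "\<dots> = pplus_ob C (pplus_ob C a c) (pplus_ob C b d)"
    using pplus_ob_assoc[OF ac right[OF ab ad bd] right[OF disj_ob_sym[OF bc] cd bd]] by simp
  finally show ?thesis .
qed

lemma disj_mor_sym: "disj_mor C f g \<Longrightarrow> disj_mor C g f"
  unfolding disj_mor_def using disj_ob_sym by blast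

lemma disj_mor_pplus_mor_right:
  assumes "disj_mor C f g" "disj_mor C f h" and gh: "disj_mor C g h"
  shows "disj_mor C f (pplus_mor C g h)"
  using assms pplus_morD[OF gh] unfolding disj_mor_def by (simp add: disj_ob_pplus_ob_right)

lemma pplus_mor_swap_middle:
  assumes ab: "disj_mor C a b" and ac: "disj_mor C a c" and ad: "disj_mor C a d"
    and bc: "disj_mor C b c" and bd: "disj_mor C b d" and cd: "disj_mor C c d"
  shows "pplus_mor C (pplus_mor C a b) (pplus_mor C c d) = pplus_mor C (pplus_mor C a c) (pplus_mor C b d)"
proof -
  note right = disj_mor_pplus_mor_right
  have "pplus_mor C (pplus_mor C a b) (pplus_mor C c d) = pplus_mor C a (pplus_mor C (pplus_mor C b c) d)"
    using pplus_mor_assoc[OF ab right[OF ac ad cd] right[OF bc bd cd]] pplus_mor_assoc[OF bc bd cd] by simp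
  also have "\<dots> = pplus_mor C a (pplus_mor C c (pplus_mor C b d))"
    using pplus_mor_commute[OF bc] pplus_mor_assoc[OF disj_mor_sym[OF bc] cd bd] by simp
  also have "\<dots> = pplus_mor C (pplus_mor C a c) (pplus_mor C b d)"
    using pplus_mor_assoc[OF ac right[OF ab ad bd] right[OF disj_mor_sym[OF bc] cd bd]] by simp
  finally show ?thesis .
qed

end

section \<open>Structure isomorphisms\<close>

abbreviation struct_iso :: "('o,'m,'x) pcat_scheme \<Rightarrow> (nat \<Rightarrow> nat) \<Rightarrow> (nat \<Rightarrow> nat) \<Rightarrow> 'o \<Rightarrow> 'm" where
  "struct_iso C v u X \<equiv> act_mor C v u (Idm C X)"

context parsummable_cat
begin

lemma struct_isoD:
  assumes "inj u" "inj v" "X \<in> Obj C"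
  shows struct_iso_in_Mor: "struct_iso C v u X \<in> Mor C"
    and dom_struct_iso: "Dom C (struct_iso C v u X) = act_ob C u X"
    and cod_struct_iso: "Cod C (struct_iso C v u X) = act_ob C v X"
  using act_morD[OF assms(1,2) Idm_in_Mor[OF assms(3)]] assms(3) by (simp_all add: dom_Idm cod_Idm)

lemma struct_iso_comp:
  assumes "inj u" "inj v" "inj w" "X \<in> Obj C"
  shows "Comp C (struct_iso C w v X) (struct_iso C v u X) = struct_iso C w u X"
  using act_mor_comp[OF assms(1-3) Idm_in_Mor[OF assms(4)] Idm_in_Mor[OF assms(4)]]
    comp_Idm_left[OF Idm_in_Mor[OF assms(4)]] assms(4) by (simp add: dom_Idm cod_Idm)

lemma struct_iso_id: "X \<in> Obj C \<Longrightarrow> struct_iso C id id X = Idm C X"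
  using act_mor_id Idm_in_Mor by blast

lemma struct_iso_act_ob:
  assumes "inj u" "inj v" "inj v'" "X \<in> Obj C"
  shows "struct_iso C v' v (act_ob C u X) = struct_iso C (v' \<circ> u) (v \<circ> u) X"
  using act_mor_Idm[OF assms(1,4), symmetric] act_mor_act_mor[OF assms(1,1,2,3) Idm_in_Mor[OF assms(4)]] by simp

lemma act_mor_struct_iso_dom:
  assumes "inj u" "inj v" "f \<in> Mor C"
  shows "Comp C (act_mor C v v f) (struct_iso C v u (Dom C f)) = act_mor C v u f"
  using act_mor_comp[OF assms(1,2,2) Idm_in_Mor[OF dom_in_Obj] assms(3)] assms(3)
  by (simp add: dom_in_Obj cod_Idm comp_Idm_right)

lemma act_mor_struct_iso_cod:
  assumes "inj u" "inj v" "f \<in> Mor C"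
  shows "Comp C (struct_iso C v u (Cod C f)) (act_mor C u u f) = act_mor C v u f"
  using act_mor_comp[OF assms(1,1,2) assms(3) Idm_in_Mor[OF cod_in_Obj]] assms(3)
  by (simp add: cod_in_Obj dom_Idm comp_Idm_left)

lemma struct_iso_is_iso:
  assumes "inj u" "inj v" "X \<in> Obj C"
  shows "is_iso C (struct_iso C v u X)"
  by (rule is_isoI[OF category _ struct_iso_in_Mor[OF assms(2,1,3)]])
    (use assms struct_isoD[OF assms] struct_isoD[OF assms(2,1,3)] struct_iso_comp act_mor_Idm in auto)

lemma is_functor_act: "inj u \<Longrightarrow> is_functor C C (act_ob C u) (act_mor C u u)"
  unfolding is_functor_def hom_def
  using category act_ob_in_Obj act_morD act_mor_Idm act_mor_comp by simp

lemma nat_iso_struct_iso: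
  assumes "inj u" "inj v"
  shows "nat_iso C C (act_ob C u) (act_mor C u u) (act_ob C v) (act_mor C v v) (struct_iso C v u)"
  by (rule nat_isoI[OF is_functor_act[OF assms(1)] is_functor_act[OF assms(2)]])
    (use assms struct_isoD struct_iso_is_iso act_mor_struct_iso_dom act_mor_struct_iso_cod in simp_all)

lemma nat_iso_identity_act:
  assumes "inj u"
  shows "nat_iso C C (\<lambda>X. X) (\<lambda>f. f) (act_ob C u) (act_mor C u u) (struct_iso C u id)"
  by (rule nat_iso_cong[OF nat_iso_struct_iso[OF inj_on_id assms]]) (simp_all add: act_ob_id act_mor_id)

lemma nat_iso_act_identity:
  assumes "inj u"
  shows "nat_iso C C (act_ob C u) (act_mor C u u) (\<lambda>X. X) (\<lambda>f. f) (struct_iso C id u)"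
  by (rule nat_iso_cong[OF nat_iso_struct_iso[OF assms inj_on_id]]) (simp_all add: act_ob_id act_mor_id)

lemma struct_iso_pzero_in_hom:
  assumes "inj u" "inj v"
  shows "struct_iso C v u (pzero C) \<in> Mor C" "Dom C (struct_iso C v u (pzero C)) = pzero C"
    "Cod C (struct_iso C v u (pzero C)) = pzero C"
  using struct_isoD[OF assms pzero_in_Obj] act_ob_pzero assms by simp_all

lemma struct_iso_pzero_compose:
  assumes w: "inj w" and w': "inj w'"
  shows "struct_iso C (w \<circ> w') id (pzero C) = Comp C (struct_iso C w id (pzero C)) (struct_iso C w' id (pzero C))"
proof -
  let ?e = "\<lambda>w. struct_iso C w id (pzero C)"
  note e' = struct_iso_pzero_in_hom[OF inj_on_id w']
  have "?e (w \<circ> w') = Comp C (struct_iso C (w \<circ> w') w (pzero C)) (?e w)"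
    using struct_iso_comp[OF inj_on_id w inj_compose[OF w w'] pzero_in_Obj] by simp
  also have "struct_iso C (w \<circ> w') w (pzero C) = act_mor C w w (?e w')"
    using act_mor_act_mor[OF inj_on_id w' w w Idm_in_Mor[OF pzero_in_Obj]] by simp
  also have "Comp C (act_mor C w w (?e w')) (?e w) = act_mor C w id (?e w')"
    using act_mor_struct_iso_dom[OF inj_on_id w e'(1)] e'(2) by simp
  also have "\<dots> = Comp C (?e w) (?e w')"
    using act_mor_struct_iso_cod[OF inj_on_id w e'(1)] e'(3) act_mor_id[OF e'(1)] by simp
  finally show ?thesis .
qed

lemma struct_iso_pzero_cong:
  fixes p :: "nat \<Rightarrow> nat"
  assumes a: "inj a" and b: "inj b" and p: "inj p" and ab: "a \<circ> p = b \<circ> p"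
  shows "struct_iso C a id (pzero C) = struct_iso C b id (pzero C)"
proof (rule is_iso_cancel_right[OF category struct_iso_is_iso[OF inj_on_id p pzero_in_Obj]])
  show "Comp C (struct_iso C a id (pzero C)) (struct_iso C p id (pzero C))
      = Comp C (struct_iso C b id (pzero C)) (struct_iso C p id (pzero C))"
    using struct_iso_pzero_compose[OF a p] struct_iso_pzero_compose[OF b p] ab by simp
qed (use struct_iso_pzero_in_hom[OF inj_on_id] a b p in simp_all)

text \<open>\<open>w \<mapsto> [w,1]\<^sub>0\<close> is multiplicative, so \<open>[a,1]\<^sub>0 = [b,1]\<^sub>0\<close> as soon as \<open>a \<circ> p = b \<circ> p\<close> for
  some injection \<open>p\<close>.  An even-valued \<open>a\<close> is thus linked to the identity through the injection
  that is \<open>a\<close> on even and the identity on odd numbers, and \<open>2w\<close> is even-valued for every \<open>w\<close>.\<close>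
lemma struct_iso_pzero_id:
  assumes w: "inj w"
  shows "struct_iso C w id (pzero C) = Idm C (pzero C)"
proof -
  have double: "inj (\<lambda>n::nat. 2 * n)" and double_plus: "inj (\<lambda>n::nat. 2 * n + 1)"
    by (simp_all add: inj_on_def)
  have even_valued: "struct_iso C a id (pzero C) = Idm C (pzero C)" if a: "inj a" "\<And>n. even (a n)" for a
  proof -
    define c where "c = (\<lambda>n::nat. if even n then a n else n)"
    have c: "inj c"
    proof (rule injI)
      fix x y assume "c x = c y"
      then show "x = y" using a unfolding c_def
        by (cases "even x"; cases "even y") (auto simp: inj_eq)
    qed
    have "struct_iso C a id (pzero C) = struct_iso C c id (pzero C)"
      by (rule struct_iso_pzero_cong[OF a(1) c double]) (auto simp: c_def)
    also have "\<dots> = struct_iso C id id (pzero C)"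
      by (rule struct_iso_pzero_cong[OF c inj_on_id double_plus]) (auto simp: c_def)
    also have "\<dots> = Idm C (pzero C)" by (rule struct_iso_id[OF pzero_in_Obj])
    finally show ?thesis .
  qed
  have "Idm C (pzero C) = Comp C (Idm C (pzero C)) (struct_iso C w id (pzero C))"
    using struct_iso_pzero_compose[OF double w] even_valued[OF inj_compose[OF double w]]
      even_valued[OF double] by simp
  also have "\<dots> = struct_iso C w id (pzero C)"
    using comp_Idm_left struct_iso_pzero_in_hom[OF inj_on_id w] by metis
  finally show ?thesis by simp
qed

lemma struct_iso_pzero:
  assumes u: "inj u" and v: "inj v"
  shows "struct_iso C v u (pzero C) = Idm C (pzero C)"
proof -
  note in_hom = struct_iso_pzero_in_hom[OF u inj_on_id]
  have "struct_iso C v u (pzero C) = Comp C (struct_iso C v id (pzero C)) (struct_iso C id u (pzero C))"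
    using struct_iso_comp[OF u inj_on_id v pzero_in_Obj] by simp
  also have "\<dots> = Comp C (struct_iso C id u (pzero C)) (struct_iso C u id (pzero C))"
    using struct_iso_pzero_id[OF v] struct_iso_pzero_id[OF u] in_hom
    by (metis comp_Idm_left comp_Idm_right)
  also have "\<dots> = Idm C (pzero C)"
    using struct_iso_comp[OF inj_on_id u inj_on_id pzero_in_Obj] struct_iso_id[OF pzero_in_Obj] by simp
  finally show ?thesis .
qed

end

lemma prod_pcat_simps [simp]:
  "Obj (prod_pcat C D) = Obj C \<times> Obj D"
  "Mor (prod_pcat C D) = Mor C \<times> Mor D"
  "Dom (prod_pcat C D) (f, g) = (Dom C f, Dom D g)"
  "Cod (prod_pcat C D) (f, g) = (Cod C f, Cod D g)"
  "Idm (prod_pcat C D) (X, Y) = (Idm C X, Idm D Y)"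
  "Comp (prod_pcat C D) (f', g') (f, g) = (Comp C f' f, Comp D g' g)"
  "act_ob (prod_pcat C D) u (X, Y) = (act_ob C u X, act_ob D u Y)"
  "act_mor (prod_pcat C D) v u (f, g) = (act_mor C v u f, act_mor D v u g)"
  "pzero (prod_pcat C D) = (pzero C, pzero D)"
  "pplus_ob (prod_pcat C D) (X, Y) (X', Y') = (pplus_ob C X X', pplus_ob D Y Y')"
  "pplus_mor (prod_pcat C D) (f, g) (f', g') = (pplus_mor C f f', pplus_mor D g g')"
  unfolding prod_pcat_def by simp_all

lemma supported_on_prod:
  "supported_on (prod_pcat C D) (X, Y) A \<longleftrightarrow> supported_on C X A \<and> supported_on D Y A"
  unfolding supported_on_def by auto

lemma supported_on_mono: "supported_on C X A \<Longrightarrow> A \<subseteq> B \<Longrightarrow> supported_on C X B"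
  unfolding supported_on_def by blast

locale parsummable_pair = C: parsummable_cat C + D: parsummable_cat D
  for C :: "('o,'m,'x) pcat_scheme" and D :: "('p,'n,'y) pcat_scheme"
begin

lemma supp_prod:
  assumes X: "X \<in> Obj C" and Y: "Y \<in> Obj D"
  shows "supp (prod_pcat C D) (X, Y) = supp C X \<union> supp D Y"
proof (rule antisym)
  show "supp (prod_pcat C D) (X, Y) \<subseteq> supp C X \<union> supp D Y"
    by (rule supp_subset_support)
      (use C.finite_supp[OF X] D.finite_supp[OF Y] C.supported_on_supp[OF X] D.supported_on_supp[OF Y]
        in \<open>auto simp: supported_on_prod intro: supported_on_mono\<close>)
  show "supp C X \<union> supp D Y \<subseteq> supp (prod_pcat C D) (X, Y)"
    unfolding supp_def supported_on_prod by blast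
qed

lemma disj_ob_prod_iff:
  "disj_ob (prod_pcat C D) (X, Y) (X', Y') \<longleftrightarrow>
   X \<in> Obj C \<and> Y \<in> Obj D \<and> X' \<in> Obj C \<and> Y' \<in> Obj D \<and>
   (supp C X \<union> supp D Y) \<inter> (supp C X' \<union> supp D Y') = {}"
  unfolding disj_ob_def using supp_prod by auto

lemma disj_ob_prodD: "disj_ob (prod_pcat C D) (X, Y) (X', Y') \<Longrightarrow> disj_ob C X X' \<and> disj_ob D Y Y'"
  unfolding disj_ob_prod_iff by (auto simp: disj_ob_def)

lemma disj_mor_prodD: "disj_mor (prod_pcat C D) (f, g) (f', g') \<Longrightarrow> disj_mor C f f' \<and> disj_mor D g g'"
  unfolding disj_mor_def using disj_ob_prodD by auto

lemma category_prod: "category (prod_pcat C D)"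
  unfolding category_def hom_def
  by (auto simp: C.dom_in_Obj C.cod_in_Obj D.dom_in_Obj D.cod_in_Obj C.Idm_in_Mor D.Idm_in_Mor
      C.dom_Idm D.dom_Idm C.cod_Idm D.cod_Idm C.comp_in_Mor D.comp_in_Mor C.dom_comp D.dom_comp
      C.cod_comp D.cod_comp C.comp_Idm_left D.comp_Idm_left C.comp_Idm_right D.comp_Idm_right
      C.comp_assoc D.comp_assoc)

lemma EM_category_prod: "EM_category (prod_pcat C D)"
  unfolding EM_category_def hom_def
  by (auto simp: category_prod C.act_ob_in_Obj D.act_ob_in_Obj C.act_morD D.act_morD
     C.act_mor_Idm D.act_mor_Idm C.act_mor_comp D.act_mor_comp C.act_ob_id D.act_ob_id
     C.act_ob_act_ob D.act_ob_act_ob C.act_mor_id D.act_mor_id C.act_mor_act_mor D.act_mor_act_mor)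

lemma finitely_supported_prod:
  assumes "P \<in> Obj (prod_pcat C D)"
  shows "\<exists>A. finite A \<and> supported_on (prod_pcat C D) P A"
proof -
  obtain X Y where P: "P = (X, Y)" "X \<in> Obj C" "Y \<in> Obj D" using assms by auto
  then have "supported_on (prod_pcat C D) P (supp C X \<union> supp D Y)"
    using C.supported_on_supp D.supported_on_supp by (auto simp: supported_on_prod intro: supported_on_mono)
  then show ?thesis using C.finite_supp[OF P(2)] D.finite_supp[OF P(3)] by blast
qed

lemma parsummable_prod: "parsummable (prod_pcat C D)"
  unfolding parsummable_def
proof (intro conjI)
  let ?P = "prod_pcat C D"
  show "supp ?P (pzero ?P) = {}"
    using supp_prod C.pzero_in_Obj D.pzero_in_Obj C.supp_pzero D.supp_pzero by simp
  show "\<forall>X Y. disj_ob ?P X Y \<longrightarrow> pplus_ob ?P X Y \<in> Obj ?P"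
    using disj_ob_prodD C.pplus_ob_in_Obj D.pplus_ob_in_Obj by force
  show "\<forall>f g. disj_mor ?P f g \<longrightarrow>
      pplus_mor ?P f g \<in> hom ?P (pplus_ob ?P (Dom ?P f) (Dom ?P g)) (pplus_ob ?P (Cod ?P f) (Cod ?P g))"
    unfolding hom_def using disj_mor_prodD C.pplus_morD D.pplus_morD by force
  show "\<forall>X Y. disj_ob ?P X Y \<longrightarrow> pplus_mor ?P (Idm ?P X) (Idm ?P Y) = Idm ?P (pplus_ob ?P X Y)"
    using disj_ob_prodD C.pplus_mor_Idm D.pplus_mor_Idm by force
  show "\<forall>f g f' g'. disj_mor ?P f g \<and> disj_mor ?P f' g' \<and> Cod ?P f = Dom ?P f' \<and> Cod ?P g = Dom ?P g' \<longrightarrow>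
      pplus_mor ?P (Comp ?P f' f) (Comp ?P g' g) = Comp ?P (pplus_mor ?P f' g') (pplus_mor ?P f g)"
    using disj_mor_prodD C.pplus_mor_comp D.pplus_mor_comp by force
  show "\<forall>X\<in>Obj ?P. pplus_ob ?P X (pzero ?P) = X \<and> pplus_ob ?P (pzero ?P) X = X"
    using C.pplus_ob_pzero D.pplus_ob_pzero C.pzero_pplus_ob D.pzero_pplus_ob by force
  show "\<forall>f\<in>Mor ?P. pplus_mor ?P f (Idm ?P (pzero ?P)) = f \<and> pplus_mor ?P (Idm ?P (pzero ?P)) f = f"
    using C.pplus_mor_pzero D.pplus_mor_pzero C.pzero_pplus_mor D.pzero_pplus_mor by force
  show "\<forall>X Y Z. disj_ob ?P X Y \<and> disj_ob ?P X Z \<and> disj_ob ?P Y Z \<longrightarrow>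
      pplus_ob ?P (pplus_ob ?P X Y) Z = pplus_ob ?P X (pplus_ob ?P Y Z)"
    using disj_ob_prodD C.pplus_ob_assoc D.pplus_ob_assoc by force
  show "\<forall>f g h. disj_mor ?P f g \<and> disj_mor ?P f h \<and> disj_mor ?P g h \<longrightarrow>
      pplus_mor ?P (pplus_mor ?P f g) h = pplus_mor ?P f (pplus_mor ?P g h)"
    using disj_mor_prodD C.pplus_mor_assoc D.pplus_mor_assoc by force
  show "\<forall>X Y. disj_ob ?P X Y \<longrightarrow> pplus_ob ?P X Y = pplus_ob ?P Y X"
    using disj_ob_prodD C.pplus_ob_commute D.pplus_ob_commute by force
  show "\<forall>f g. disj_mor ?P f g \<longrightarrow> pplus_mor ?P f g = pplus_mor ?P g f"
    using disj_mor_prodD C.pplus_mor_commute D.pplus_mor_commute by force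
  show "\<forall>u X Y. inj u \<and> disj_ob ?P X Y \<longrightarrow>
      act_ob ?P u (pplus_ob ?P X Y) = pplus_ob ?P (act_ob ?P u X) (act_ob ?P u Y)"
    using disj_ob_prodD C.act_ob_pplus_ob D.act_ob_pplus_ob by force
  show "\<forall>u v f g. inj u \<and> inj v \<and> disj_mor ?P f g \<longrightarrow>
      act_mor ?P v u (pplus_mor ?P f g) = pplus_mor ?P (act_mor ?P v u f) (act_mor ?P v u g)"
    using disj_mor_prodD C.act_mor_pplus_mor D.act_mor_pplus_mor by force
qed (use EM_category_prod finitely_supported_prod C.pzero_in_Obj D.pzero_in_Obj in simp_all)

sublocale P: parsummable_cat "prod_pcat C D"
  by unfold_locales (rule parsummable_prod)

lemma pmorph_embed_fst: "pmorph C (prod_pcat C D) (\<lambda>X. (X, pzero D)) (\<lambda>f. (f, Idm D (pzero D)))"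
  unfolding pmorph_def is_functor_def hom_def
  using C.parsummable P.parsummable C.category category_prod D.pzero_in_Obj D.Idm_in_Mor D.dom_Idm D.cod_Idm
    D.comp_Idm_Idm C.dom_in_Obj C.cod_in_Obj D.act_ob_pzero D.struct_iso_pzero
    C.pplus_ob_pzero D.pplus_ob_pzero D.pplus_mor_pzero
  by (simp add: C.act_ob_in_Obj)

lemma pmorph_embed_snd: "pmorph D (prod_pcat C D) (\<lambda>Y. (pzero C, Y)) (\<lambda>g. (Idm C (pzero C), g))"
  unfolding pmorph_def is_functor_def hom_def
  using D.parsummable P.parsummable D.category category_prod C.pzero_in_Obj C.Idm_in_Mor C.dom_Idm C.cod_Idm
    C.comp_Idm_Idm D.dom_in_Obj D.cod_in_Obj C.act_ob_pzero C.struct_iso_pzero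
    D.pplus_ob_pzero C.pplus_ob_pzero C.pplus_mor_pzero
  by simp

lemma disj_ob_embed_fst: "disj_ob C X Y \<Longrightarrow> disj_ob (prod_pcat C D) (X, pzero D) (Y, pzero D)"
  unfolding disj_ob_prod_iff using D.pzero_in_Obj D.supp_pzero by (simp add: disj_ob_def)

lemma disj_ob_embed_snd: "disj_ob D X Y \<Longrightarrow> disj_ob (prod_pcat C D) (pzero C, X) (pzero C, Y)"
  unfolding disj_ob_prod_iff using C.pzero_in_Obj C.supp_pzero by (simp add: disj_ob_def)

end

section \<open>Pushforward along a sum-preserving functor\<close>

lemma push_pcat_simps [simp]:
  "Obj (push_pcat C D Go Gm) = Obj C"
  "(X, Y, d) \<in> Mor (push_pcat C D Go Gm) \<longleftrightarrow>
     X \<in> Obj C \<and> Y \<in> Obj C \<and> d \<in> Mor D \<and> Dom D d = Go X \<and> Cod D d = Go Y"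
  "Dom (push_pcat C D Go Gm) (X, Y, d) = X"
  "Cod (push_pcat C D Go Gm) (X, Y, d) = Y"
  "Idm (push_pcat C D Go Gm) X = (X, X, Idm D (Go X))"
  "Comp (push_pcat C D Go Gm) (Y', Z, e) (X, Y, d) = (X, Z, Comp D e d)"
  "act_ob (push_pcat C D Go Gm) = act_ob C"
  "act_mor (push_pcat C D Go Gm) v u (X, Y, d) = (act_ob C u X, act_ob C v Y,
     Comp D (Gm (struct_iso C v id Y)) (Comp D d (Gm (struct_iso C id u X))))"
  "pzero (push_pcat C D Go Gm) = pzero C"
  "pplus_ob (push_pcat C D Go Gm) = pplus_ob C"
  "pplus_mor (push_pcat C D Go Gm) (X, Y, d) (X', Y', d') = (pplus_ob C X X', pplus_ob C Y Y', pplus_mor D d d')"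
  unfolding push_pcat_def by (simp_all add: hom_def)

lemma supported_on_push [simp]: "supported_on (push_pcat C D Go Gm) = supported_on C"
  unfolding supported_on_def[abs_def] by simp

lemma supp_push [simp]: "supp (push_pcat C D Go Gm) = supp C"
  unfolding supp_def[abs_def] by simp

lemma disj_ob_push [simp]: "disj_ob (push_pcat C D Go Gm) = disj_ob C"
  unfolding disj_ob_def[abs_def] by simp

locale pushforward = C: parsummable_cat C + D: parsummable_cat D
  for C :: "('o,'m,'x) pcat_scheme" and D :: "('p,'n,'y) pcat_scheme" +
  fixes Go :: "'o \<Rightarrow> 'p" and Gm :: "'m \<Rightarrow> 'n"
  assumes G_functor: "is_functor C D Go Gm" and G_preserves_sums: "preserves_sums C D Go Gm"
begin

abbreviation "E \<equiv> push_pcat C D Go Gm"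

lemmas G_ob = functor_ob[OF G_functor] and G_mor = functor_mor[OF G_functor]
  and G_dom = functor_dom[OF G_functor] and G_cod = functor_cod[OF G_functor]
  and G_Idm = functor_id[OF G_functor] and G_comp = functor_comp[OF G_functor]

lemma preserves_sumsD:
  shows G_pzero: "Go (pzero C) = pzero D"
    and G_disj_ob: "disj_ob C X Y \<Longrightarrow> disj_ob D (Go X) (Go Y)"
    and G_pplus_ob: "disj_ob C X Y \<Longrightarrow> Go (pplus_ob C X Y) = pplus_ob D (Go X) (Go Y)"
    and G_pplus_mor: "disj_mor C f g \<Longrightarrow> Gm (pplus_mor C f g) = pplus_mor D (Gm f) (Gm g)"
  using G_preserves_sums unfolding preserves_sums_def by blast+

lemma G_struct_isoD:
  assumes "inj u" "inj v" "X \<in> Obj C"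
  shows G_struct_iso_in_Mor: "Gm (struct_iso C v u X) \<in> Mor D"
    and dom_G_struct_iso: "Dom D (Gm (struct_iso C v u X)) = Go (act_ob C u X)"
    and cod_G_struct_iso: "Cod D (Gm (struct_iso C v u X)) = Go (act_ob C v X)"
  using G_mor G_dom G_cod C.struct_isoD[OF assms] by simp_all

lemma G_struct_iso_comp:
  assumes "inj u" "inj v" "inj w" "X \<in> Obj C"
  shows "Comp D (Gm (struct_iso C w v X)) (Gm (struct_iso C v u X)) = Gm (struct_iso C w u X)"
  using G_comp[of "struct_iso C v u X" "struct_iso C w v X"] C.struct_isoD[OF assms(1,2,4)]
    C.struct_isoD[OF assms(2,3,4)] C.struct_iso_comp[OF assms] by simp

lemma G_struct_iso_id: "X \<in> Obj C \<Longrightarrow> Gm (struct_iso C id id X) = Idm D (Go X)"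
  using C.struct_iso_id G_Idm by simp

lemma G_struct_iso_cancel:
  assumes v: "inj v" and Y: "Y \<in> Obj C" and x: "x \<in> Mor D" "Cod D x = Go Y"
  shows "Comp D (Gm (struct_iso C id v Y)) (Comp D (Gm (struct_iso C v id Y)) x) = x"
  using D.comp_assoc[OF x(1) G_struct_iso_in_Mor[OF inj_on_id v Y] G_struct_iso_in_Mor[OF v inj_on_id Y]]
    G_struct_isoD[OF inj_on_id v Y] G_struct_isoD[OF v inj_on_id Y] G_struct_iso_comp[OF inj_on_id v inj_on_id Y]
    G_struct_iso_id[OF Y] D.comp_Idm_left[OF x(1)] C.act_ob_id[OF Y] x by simp

lemma Mor_push_iff:
  "f \<in> Mor E \<longleftrightarrow> (\<exists>X Y d. f = (X, Y, d) \<and> X \<in> Obj C \<and> Y \<in> Obj C \<and> d \<in> Mor D \<and> Dom D d = Go X \<and> Cod D d = Go Y)"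
  by (cases f) auto

lemma category_push: "category E"
  unfolding category_def hom_def
proof (intro conjI)
  show "\<forall>X\<in>Obj E. Idm E X \<in> {f \<in> Mor E. Dom E f = X \<and> Cod E f = X}"
    using G_ob D.Idm_in_Mor D.dom_Idm D.cod_Idm by simp
  show "\<forall>f\<in>Mor E. Comp E (Idm E (Cod E f)) f = f \<and> Comp E f (Idm E (Dom E f)) = f"
    using D.comp_Idm_left D.comp_Idm_right by (force simp: Mor_push_iff)
qed (auto simp: Mor_push_iff D.comp_in_Mor D.dom_comp D.cod_comp D.comp_assoc)

abbreviation act_hom :: "(nat \<Rightarrow> nat) \<Rightarrow> (nat \<Rightarrow> nat) \<Rightarrow> 'o \<Rightarrow> 'o \<Rightarrow> 'n \<Rightarrow> 'n" where
  "act_hom v u X Y d \<equiv> Comp D (Gm (struct_iso C v id Y)) (Comp D d (Gm (struct_iso C id u X)))"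

lemma act_homD:
  assumes u: "inj u" and v: "inj v" and X: "X \<in> Obj C" and Y: "Y \<in> Obj C"
    and d: "d \<in> Mor D" "Dom D d = Go X" "Cod D d = Go Y"
  shows act_hom_in_Mor: "act_hom v u X Y d \<in> Mor D"
    and dom_act_hom: "Dom D (act_hom v u X Y d) = Go (act_ob C u X)"
    and cod_act_hom: "Cod D (act_hom v u X Y d) = Go (act_ob C v Y)"
  using d G_struct_isoD[OF inj_on_id v Y] G_struct_isoD[OF u inj_on_id X] C.act_ob_id X Y
  by (simp_all add: D.comp_in_Mor D.dom_comp D.cod_comp)

lemma act_hom_Idm:
  assumes u: "inj u" and X: "X \<in> Obj C"
  shows "act_hom u u X X (Idm D (Go X)) = Idm D (Go (act_ob C u X))"
  using G_struct_isoD[OF u inj_on_id X] D.comp_Idm_left[of "Gm (struct_iso C id u X)"]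
    G_struct_iso_comp[OF u inj_on_id u X] C.act_mor_Idm[OF u X] G_Idm C.act_ob_in_Obj[OF u X] C.act_ob_id[OF X]
  by simp

lemma act_hom_comp:
  assumes u: "inj u" and v: "inj v" and w: "inj w" and X: "X \<in> Obj C" and Y: "Y \<in> Obj C" and Z: "Z \<in> Obj C"
    and d: "d \<in> Mor D" "Dom D d = Go X" "Cod D d = Go Y"
    and e: "e \<in> Mor D" "Dom D e = Go Y" "Cod D e = Go Z"
  shows "Comp D (act_hom w v Y Z e) (act_hom v u X Y d) = act_hom w u X Z (Comp D e d)"
proof -
  note str = G_struct_isoD[OF inj_on_id w Z] G_struct_isoD[OF v inj_on_id Y]
    G_struct_isoD[OF inj_on_id v Y] G_struct_isoD[OF u inj_on_id X]
  note C.act_ob_id[OF X, simp] C.act_ob_id[OF Y, simp] C.act_ob_id[OF Z, simp]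
  let ?a = "Gm (struct_iso C w id Z)" and ?b = "Gm (struct_iso C id v Y)"
    and ?c = "Gm (struct_iso C v id Y)" and ?s = "Gm (struct_iso C id u X)"
  have "Comp D (act_hom w v Y Z e) (act_hom v u X Y d)
      = Comp D ?a (Comp D e (Comp D ?b (Comp D ?c (Comp D d ?s))))"
    using str d e by (simp add: D.comp_assoc D.comp_in_Mor D.dom_comp D.cod_comp)
  also have "\<dots> = Comp D ?a (Comp D e (Comp D d ?s))"
    using G_struct_iso_cancel[OF v Y, of "Comp D d ?s"] str d by (simp add: D.comp_in_Mor D.cod_comp)
  also have "\<dots> = act_hom w u X Z (Comp D e d)"
    using str d e by (simp add: D.comp_assoc)
  finally show ?thesis .
qed

lemma act_hom_id:
  assumes X: "X \<in> Obj C" and Y: "Y \<in> Obj C" and d: "d \<in> Mor D" "Dom D d = Go X" "Cod D d = Go Y"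
  shows "act_hom id id X Y d = d"
  using G_struct_iso_id[OF X] G_struct_iso_id[OF Y] D.comp_Idm_left[OF d(1)] D.comp_Idm_right[OF d(1)] d
    D.comp_in_Mor D.cod_comp D.Idm_in_Mor D.dom_Idm G_ob X
  by (metis D.cod_Idm)

lemma act_hom_act_hom:
  assumes u: "inj u" and u': "inj u'" and v: "inj v" and v': "inj v'" and X: "X \<in> Obj C" and Y: "Y \<in> Obj C"
    and d: "d \<in> Mor D" "Dom D d = Go X" "Cod D d = Go Y"
  shows "act_hom v' v (act_ob C u X) (act_ob C u' Y) (act_hom u' u X Y d) = act_hom (v' \<circ> u') (v \<circ> u) X Y d"
proof -
  have uX: "act_ob C u X \<in> Obj C" and uY: "act_ob C u' Y \<in> Obj C" using C.act_ob_in_Obj u u' X Y by auto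
  note str = G_struct_isoD[OF inj_on_id v' uY] G_struct_isoD[OF inj_on_id u' Y]
    G_struct_isoD[OF u inj_on_id X] G_struct_isoD[OF v inj_on_id uX]
  note C.act_ob_id[OF X, simp] C.act_ob_id[OF Y, simp] C.act_ob_id[OF uX, simp] C.act_ob_id[OF uY, simp]
  have compose_v: "Comp D (Gm (struct_iso C v' id (act_ob C u' Y))) (Gm (struct_iso C u' id Y))
      = Gm (struct_iso C (v' \<circ> u') id Y)"
    using C.struct_iso_act_ob[OF u' inj_on_id v' Y] G_struct_iso_comp[OF inj_on_id u' inj_compose[OF v' u'] Y]
    by simp
  have compose_u: "Comp D (Gm (struct_iso C id u X)) (Gm (struct_iso C id v (act_ob C u X)))
      = Gm (struct_iso C id (v \<circ> u) X)"
    using C.struct_iso_act_ob[OF u v inj_on_id X] G_struct_iso_comp[OF inj_compose[OF v u] u inj_on_id X]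
    by simp
  have "act_hom v' v (act_ob C u X) (act_ob C u' Y) (act_hom u' u X Y d)
      = Comp D (Comp D (Gm (struct_iso C v' id (act_ob C u' Y))) (Gm (struct_iso C u' id Y)))
          (Comp D d (Comp D (Gm (struct_iso C id u X)) (Gm (struct_iso C id v (act_ob C u X)))))"
    using str d by (simp add: D.comp_assoc D.comp_in_Mor D.dom_comp D.cod_comp)
  then show ?thesis using compose_u compose_v by simp
qed

lemma EM_category_push: "EM_category E"
  unfolding EM_category_def
proof (intro conjI allI impI ballI)
  fix u v :: "nat \<Rightarrow> nat" and f assume "inj u \<and> inj v \<and> f \<in> Mor E"
  then show "act_mor E v u f \<in> hom E (act_ob E u (Dom E f)) (act_ob E v (Cod E f))"
    using act_homD C.act_ob_in_Obj by (auto simp: Mor_push_iff hom_def)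
next
  fix u v w :: "nat \<Rightarrow> nat" and f g
  assume "inj u \<and> inj v \<and> inj w \<and> f \<in> Mor E \<and> g \<in> Mor E \<and> Cod E f = Dom E g"
  then show "Comp E (act_mor E w v g) (act_mor E v u f) = act_mor E w u (Comp E g f)"
    using act_hom_comp by (auto simp: Mor_push_iff)
next
  fix f assume "f \<in> Mor E"
  then show "act_mor E id id f = f" using act_hom_id C.act_ob_id by (auto simp: Mor_push_iff)
next
  fix u u' v v' :: "nat \<Rightarrow> nat" and f assume "inj u \<and> inj u' \<and> inj v \<and> inj v' \<and> f \<in> Mor E"
  then show "act_mor E v' v (act_mor E u' u f) = act_mor E (v' \<circ> u') (v \<circ> u) f"
    using act_hom_act_hom C.act_ob_act_ob by (auto simp: Mor_push_iff)
qed (use category_push C.act_ob_in_Obj act_hom_Idm C.act_ob_id C.act_ob_act_ob in simp_all)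

lemma disj_mor_over_G:
  "a \<in> Mor D \<Longrightarrow> a' \<in> Mor D \<Longrightarrow> Dom D a = Go P \<Longrightarrow> Dom D a' = Go P' \<Longrightarrow>
   Cod D a = Go Q \<Longrightarrow> Cod D a' = Go Q' \<Longrightarrow> disj_ob C P P' \<Longrightarrow> disj_ob C Q Q' \<Longrightarrow> disj_mor D a a'"
  unfolding disj_mor_def using G_disj_ob by simp

lemma disj_mor_push_iff:
  "disj_mor E (X, Y, d) (X', Y', d') \<longleftrightarrow>
   (X, Y, d) \<in> Mor E \<and> (X', Y', d') \<in> Mor E \<and> disj_ob C X X' \<and> disj_ob C Y Y'"
  unfolding disj_mor_def by simp

lemma disj_mor_pushD:
  assumes "disj_mor E (X, Y, d) (X', Y', d')"
  shows "X \<in> Obj C" "Y \<in> Obj C" "X' \<in> Obj C" "Y' \<in> Obj C" "d \<in> Mor D" "d' \<in> Mor D"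
   "Dom D d = Go X" "Cod D d = Go Y" "Dom D d' = Go X'" "Cod D d' = Go Y'"
   "disj_ob C X X'" "disj_ob C Y Y'" "disj_mor D d d'"
  using assms disj_mor_over_G[of d d' X X' Y Y'] unfolding disj_mor_push_iff by auto

lemma G_struct_iso_pplus_ob:
  assumes u: "inj u" and v: "inj v" and XX': "disj_ob C X X'"
  shows "Gm (struct_iso C v u (pplus_ob C X X')) = pplus_mor D (Gm (struct_iso C v u X)) (Gm (struct_iso C v u X'))"
proof -
  have X: "X \<in> Obj C" "X' \<in> Obj C" using XX' unfolding disj_ob_def by auto
  have "disj_mor C (Idm C X) (Idm C X')"
    unfolding disj_mor_def using XX' X C.Idm_in_Mor C.dom_Idm C.cod_Idm by simp
  moreover have "disj_mor C (struct_iso C v u X) (struct_iso C v u X')"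
    unfolding disj_mor_def using C.struct_isoD[OF u v] X C.disj_ob_act_ob[OF u XX'] C.disj_ob_act_ob[OF v XX']
    by simp
  ultimately show ?thesis
    using C.pplus_mor_Idm[OF XX', symmetric] C.act_mor_pplus_mor[OF u v] G_pplus_mor by simp
qed

lemma act_mor_push_pplus_mor:
  assumes u: "inj u" and v: "inj v" and dd': "disj_mor E (X, Y, d) (X', Y', d')"
  shows "act_mor E v u (pplus_mor E (X, Y, d) (X', Y', d'))
    = pplus_mor E (act_mor E v u (X, Y, d)) (act_mor E v u (X', Y', d'))"
proof -
  note dd = disj_mor_pushD[OF dd']
  note str = G_struct_isoD[OF u inj_on_id dd(1)] G_struct_isoD[OF u inj_on_id dd(3)]
    G_struct_isoD[OF inj_on_id v dd(2)] G_struct_isoD[OF inj_on_id v dd(4)]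
  note C.act_ob_id[OF dd(1), simp] C.act_ob_id[OF dd(2), simp] C.act_ob_id[OF dd(3), simp]
    C.act_ob_id[OF dd(4), simp]
  have uX: "disj_ob C (act_ob C u X) (act_ob C u X')" by (rule C.disj_ob_act_ob[OF u dd(11)])
  have vY: "disj_ob C (act_ob C v Y) (act_ob C v Y')" by (rule C.disj_ob_act_ob[OF v dd(12)])
  have from_X: "disj_mor D (Gm (struct_iso C id u X)) (Gm (struct_iso C id u X'))"
    using disj_mor_over_G str uX dd(11) by simp
  have to_Y: "disj_mor D (Gm (struct_iso C v id Y)) (Gm (struct_iso C v id Y'))"
    using disj_mor_over_G str vY dd(12) by simp
  have right: "disj_mor D (Comp D d (Gm (struct_iso C id u X))) (Comp D d' (Gm (struct_iso C id u X')))"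
    using disj_mor_over_G[OF _ _ _ _ _ _ uX dd(12)] str dd by (simp add: D.comp_in_Mor D.dom_comp D.cod_comp)
  have "act_hom v u (pplus_ob C X X') (pplus_ob C Y Y') (pplus_mor D d d')
     = Comp D (pplus_mor D (Gm (struct_iso C v id Y)) (Gm (struct_iso C v id Y')))
         (pplus_mor D (Comp D d (Gm (struct_iso C id u X))) (Comp D d' (Gm (struct_iso C id u X'))))"
    using G_struct_iso_pplus_ob[OF inj_on_id v dd(12)] G_struct_iso_pplus_ob[OF u inj_on_id dd(11)]
      D.pplus_mor_comp[OF from_X dd(13)] str dd by simp
  also have "\<dots> = pplus_mor D (act_hom v u X Y d) (act_hom v u X' Y' d')"
    using D.pplus_mor_comp[OF right to_Y] str dd by (simp add: D.cod_comp)
  finally show ?thesis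
    using C.act_ob_pplus_ob[OF u dd(11)] C.act_ob_pplus_ob[OF v dd(12)] by simp
qed

lemma parsummable_push: "parsummable E"
  unfolding parsummable_def split_paired_All
proof (intro conjI allI impI ballI)
  fix X Y d X' Y' d' assume "disj_mor E (X, Y, d) (X', Y', d')"
  note dd = disj_mor_pushD[OF this]
  show "pplus_mor E (X, Y, d) (X', Y', d') \<in> hom E (pplus_ob E (Dom E (X, Y, d)) (Dom E (X', Y', d')))
      (pplus_ob E (Cod E (X, Y, d)) (Cod E (X', Y', d')))"
    unfolding hom_def using dd D.pplus_morD[OF dd(13)] C.pplus_ob_in_Obj G_pplus_ob by simp
  show "pplus_mor E (X, Y, d) (X', Y', d') = pplus_mor E (X', Y', d') (X, Y, d)"
    using dd C.pplus_ob_commute D.pplus_mor_commute by simp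
next
  fix X Y assume "disj_ob E X Y"
  then show "pplus_mor E (Idm E X) (Idm E Y) = Idm E (pplus_ob E X Y)"
    using D.pplus_mor_Idm[OF G_disj_ob] G_pplus_ob by simp
next
  fix X Y d X' Y' d' Y1 Z e Y1' Z' e'
  assume "disj_mor E (X, Y, d) (X', Y', d') \<and> disj_mor E (Y1, Z, e) (Y1', Z', e')
    \<and> Cod E (X, Y, d) = Dom E (Y1, Z, e) \<and> Cod E (X', Y', d') = Dom E (Y1', Z', e')"
  then have "disj_mor D d d'" "disj_mor D e e'" "Cod D d = Dom D e" "Cod D d' = Dom D e'"
    using disj_mor_pushD by auto
  then show "pplus_mor E (Comp E (Y1, Z, e) (X, Y, d)) (Comp E (Y1', Z', e') (X', Y', d'))
      = Comp E (pplus_mor E (Y1, Z, e) (Y1', Z', e')) (pplus_mor E (X, Y, d) (X', Y', d'))"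
    using D.pplus_mor_comp by simp
next
  fix f assume "f \<in> Mor E"
  then show "pplus_mor E f (Idm E (pzero E)) = f" "pplus_mor E (Idm E (pzero E)) f = f"
    using C.pplus_ob_pzero C.pzero_pplus_ob D.pplus_mor_pzero D.pzero_pplus_mor G_pzero
    by (auto simp: Mor_push_iff)
next
  fix X Y d X' Y' d' X'' Y'' d''
  assume "disj_mor E (X, Y, d) (X', Y', d') \<and> disj_mor E (X, Y, d) (X'', Y'', d'')
    \<and> disj_mor E (X', Y', d') (X'', Y'', d'')"
  then have "disj_mor E (X, Y, d) (X', Y', d')" "disj_mor E (X, Y, d) (X'', Y'', d'')"
    "disj_mor E (X', Y', d') (X'', Y'', d'')" by simp_all
  then show "pplus_mor E (pplus_mor E (X, Y, d) (X', Y', d')) (X'', Y'', d'')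
      = pplus_mor E (X, Y, d) (pplus_mor E (X', Y', d') (X'', Y'', d''))"
    using disj_mor_pushD(11-13) C.pplus_ob_assoc D.pplus_mor_assoc by simp
next
  fix u v :: "nat \<Rightarrow> nat" and X Y d X' Y' d'
  assume "inj u \<and> inj v \<and> disj_mor E (X, Y, d) (X', Y', d')"
  then show "act_mor E v u (pplus_mor E (X, Y, d) (X', Y', d'))
      = pplus_mor E (act_mor E v u (X, Y, d)) (act_mor E v u (X', Y', d'))"
    using act_mor_push_pplus_mor by blast
qed (use EM_category_push C.finite_support_exists C.pzero_in_Obj C.supp_pzero C.pplus_ob_in_Obj
      C.pplus_ob_pzero C.pzero_pplus_ob C.pplus_ob_assoc C.pplus_ob_commute C.act_ob_pplus_ob in simp_all)

sublocale E: parsummable_cat E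
  by unfold_locales (rule parsummable_push)

lemma is_functor_push_I: "is_functor C E (\<lambda>X. X) (push_I C Gm)"
  unfolding is_functor_def hom_def push_I_def
  using C.category category_push G_ob G_mor G_dom G_cod G_Idm G_comp C.dom_in_Obj C.cod_in_Obj
    C.dom_Idm C.cod_Idm C.dom_comp C.cod_comp
  by simp

lemma act_mor_push_I:
  assumes u: "inj u" and v: "inj v" and f: "f \<in> Mor C"
  shows "act_mor E v u (push_I C Gm f) = push_I C Gm (act_mor C v u f)"
proof -
  have X: "Dom C f \<in> Obj C" and Y: "Cod C f \<in> Obj C" using f C.dom_in_Obj C.cod_in_Obj by auto
  note str_X = C.struct_isoD[OF u inj_on_id X] and str_Y = C.struct_isoD[OF inj_on_id v Y]
    and uf = C.act_morD[OF u inj_on_id f]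
  have "Comp C f (struct_iso C id u (Dom C f)) = act_mor C id u f"
    using C.act_mor_struct_iso_dom[OF u inj_on_id f] C.act_mor_id[OF f] by simp
  then have "Comp D (Gm f) (Gm (struct_iso C id u (Dom C f))) = Gm (act_mor C id u f)"
    using G_comp[OF str_X(1) f] str_X C.act_ob_id[OF X] by simp
  moreover have "Comp D (Gm (struct_iso C v id (Cod C f))) (Gm (act_mor C id u f)) = Gm (act_mor C v u f)"
    using G_comp[OF uf(1) str_Y(1)] C.act_mor_struct_iso_cod[OF inj_on_id v f] C.act_ob_id[OF Y]
      C.act_mor_comp[OF u inj_on_id v f C.Idm_in_Mor[OF Y]] C.comp_Idm_left[OF f] uf str_Y C.dom_Idm[OF Y]
    by simp
  ultimately show ?thesis
    unfolding push_I_def using C.act_morD[OF u v f] by simp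
qed

lemma pmorph_push_I: "pmorph C E (\<lambda>X. X) (push_I C Gm)"
  unfolding pmorph_def
  using C.parsummable parsummable_push is_functor_push_I act_mor_push_I C.pplus_morD G_pplus_mor
    C.dom_act_mor C.cod_act_mor
  by (simp add: push_I_def)

lemma is_functor_forget: "is_functor E D Go (snd \<circ> snd)"
  unfolding is_functor_def hom_def
  using category_push D.category G_ob G_Idm by (auto simp: Mor_push_iff D.comp_in_Mor D.dom_comp D.cod_comp)

lemma is_iso_push:
  assumes "(X, Y, d) \<in> Mor E" and "is_iso D d"
  shows "is_iso E (X, Y, d)"
proof -
  obtain d' where d': "d \<in> Mor D" "d' \<in> Mor D" "Dom D d' = Cod D d" "Cod D d' = Dom D d"
    "Comp D d' d = Idm D (Dom D d)" "Comp D d d' = Idm D (Cod D d)" using is_isoE[OF assms(2)] by blast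
  show ?thesis
    by (rule is_isoI[OF category_push, of _ "(Y, X, d')"]) (use assms(1) d' in auto)
qed

text \<open>The forgetful functor \<open>E \<rightarrow> D\<close> is fully faithful, so natural isomorphisms lift along it.\<close>
lemma nat_iso_lift:
  assumes F1: "is_functor A E F1 F1m" and F2: "is_functor A E F2 F2m"
    and \<eta>: "nat_iso A D (Go \<circ> F1) ((snd \<circ> snd) \<circ> F1m) (Go \<circ> F2) ((snd \<circ> snd) \<circ> F2m) \<eta>"
  shows "nat_iso A E F1 F1m F2 F2m (\<lambda>X. (F1 X, F2 X, \<eta> X))"
proof (rule nat_isoI[OF F1 F2])
  fix X assume X: "X \<in> Obj A"
  have "(F1 X, F2 X, \<eta> X) \<in> Mor E"
    using nat_isoD(3-5)[OF \<eta> X] functor_ob[OF F1 X] functor_ob[OF F2 X] by simp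
  then show "(F1 X, F2 X, \<eta> X) \<in> Mor E \<and> Dom E (F1 X, F2 X, \<eta> X) = F1 X \<and> Cod E (F1 X, F2 X, \<eta> X) = F2 X
      \<and> is_iso E (F1 X, F2 X, \<eta> X)"
    using is_iso_push nat_iso_is_iso[OF \<eta> X] by simp
next
  fix f assume f: "f \<in> Mor A"
  obtain X1 Y1 d1 where F1f: "F1m f = (X1, Y1, d1)" by (cases "F1m f")
  obtain X2 Y2 d2 where F2f: "F2m f = (X2, Y2, d2)" by (cases "F2m f")
  have "X1 = F1 (Dom A f)" "Y1 = F1 (Cod A f)" "X2 = F2 (Dom A f)" "Y2 = F2 (Cod A f)"
    using functor_dom[OF F1 f] functor_cod[OF F1 f] functor_dom[OF F2 f] functor_cod[OF F2 f] F1f F2f by simp_all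
  then show "Comp E (F1 (Cod A f), F2 (Cod A f), \<eta> (Cod A f)) (F1m f)
      = Comp E (F2m f) (F1 (Dom A f), F2 (Dom A f), \<eta> (Dom A f))"
    using nat_iso_natural[OF \<eta> f] F1f F2f by simp
qed

lemma equivalence_push:
  assumes I: "is_functor A E Io Im" and GI: "equivalence A D (Go \<circ> Io) ((snd \<circ> snd) \<circ> Im)"
  shows "equivalence A E Io Im"
proof -
  obtain Ko Km \<eta> \<epsilon> where K: "is_functor D A Ko Km"
    and \<eta>: "nat_iso A A (\<lambda>X. X) (\<lambda>f. f) (Ko \<circ> (Go \<circ> Io)) (Km \<circ> ((snd \<circ> snd) \<circ> Im)) \<eta>"
    and \<epsilon>: "nat_iso D D ((Go \<circ> Io) \<circ> Ko) (((snd \<circ> snd) \<circ> Im) \<circ> Km) (\<lambda>X. X) (\<lambda>f. f) \<epsilon>"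
    using GI unfolding equivalence_def by blast
  have KH: "is_functor E A (Ko \<circ> Go) (Km \<circ> (snd \<circ> snd))"
    by (rule is_functor_compose[OF is_functor_forget K])
  have "nat_iso E D (Go \<circ> (Io \<circ> (Ko \<circ> Go))) ((snd \<circ> snd) \<circ> (Im \<circ> (Km \<circ> (snd \<circ> snd))))
      (Go \<circ> (\<lambda>X. X)) ((snd \<circ> snd) \<circ> (\<lambda>f. f)) (\<epsilon> \<circ> Go)"
    using nat_iso_whisker_left[OF \<epsilon> is_functor_forget] by (simp add: comp_assoc flip: id_def)
  then have "nat_iso E E (Io \<circ> (Ko \<circ> Go)) (Im \<circ> (Km \<circ> (snd \<circ> snd))) (\<lambda>X. X) (\<lambda>f. f)
      (\<lambda>P. ((Io \<circ> (Ko \<circ> Go)) P, P, (\<epsilon> \<circ> Go) P))"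
    by (rule nat_iso_lift[OF is_functor_compose[OF KH I] is_functor_identity[OF category_push]])
  moreover have "nat_iso A A (\<lambda>X. X) (\<lambda>f. f) ((Ko \<circ> Go) \<circ> Io) ((Km \<circ> (snd \<circ> snd)) \<circ> Im) \<eta>"
    using \<eta> by (simp add: comp_assoc)
  ultimately show ?thesis
    unfolding equivalence_def using I KH by blast
qed

end

section \<open>The mapping cylinder\<close>

locale cylinder = parsummable_pair C D
  for C :: "('o,'m,'x) pcat_scheme" and D :: "('p,'n,'y) pcat_scheme" +
  fixes Fo :: "'o \<Rightarrow> 'p" and Fm :: "'m \<Rightarrow> 'n" and mu :: "nat \<times> nat \<Rightarrow> nat"
  assumes F_functor: "is_functor C D Fo Fm" and F_preserves_sums: "preserves_sums C D Fo Fm"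
    and mu_inj: "inj_on mu ({0, 1} \<times> UNIV)"
begin

abbreviation "m0 \<equiv> (\<lambda>n. mu (0, n))"
abbreviation "m1 \<equiv> (\<lambda>n. mu (1, n))"

lemma mu_eq_iff: "i \<in> {0, 1} \<Longrightarrow> j \<in> {0, 1} \<Longrightarrow> mu (i, a) = mu (j, b) \<longleftrightarrow> i = j \<and> a = b"
  using inj_onD[OF mu_inj, of "(i, a)" "(j, b)"] by auto

lemma inj_m0: "inj m0" and inj_m1: "inj m1" and m0_neq_m1: "m0 a \<noteq> m1 b"
  by (simp_all add: inj_on_def mu_eq_iff)

lemma Fmu_ob_simp [simp]: "Fmu_ob D mu Fo (X, Y) = pplus_ob D (act_ob D m0 (Fo X)) (act_ob D m1 Y)"
  unfolding Fmu_ob_def mu_ob_def by simp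

lemma Fmu_mor_simp [simp]: "Fmu_mor D mu Fm (f, g) = pplus_mor D (act_mor D m0 m0 (Fm f)) (act_mor D m1 m1 g)"
  unfolding Fmu_mor_def mu_mor_def by simp

interpretation F: pushforward C D Fo Fm
  by unfold_locales (rule F_functor, rule F_preserves_sums)

lemma disj_ob_m0_m1:
  assumes "A \<in> Obj D" "B \<in> Obj D"
  shows "disj_ob D (act_ob D m0 A) (act_ob D m1 B)"
proof -
  have "supp D (act_ob D m0 A) \<inter> supp D (act_ob D m1 B) \<subseteq> range m0 \<inter> range m1"
    using D.supp_act_ob_subset[OF inj_m0 assms(1)] D.supp_act_ob_subset[OF inj_m1 assms(2)] by blast
  also have "\<dots> = {}" using m0_neq_m1 by blast
  finally show ?thesis
    using D.act_ob_in_Obj[OF inj_m0 assms(1)] D.act_ob_in_Obj[OF inj_m1 assms(2)] unfolding disj_ob_def by blast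
qed

lemma disj_mor_m0_m1:
  assumes "a \<in> Mor D" "b \<in> Mor D"
  shows "disj_mor D (act_mor D m0 m0 a) (act_mor D m1 m1 b)"
  unfolding disj_mor_def
  using assms D.act_morD[OF inj_m0 inj_m0 assms(1)] D.act_morD[OF inj_m1 inj_m1 assms(2)]
    disj_ob_m0_m1 D.dom_in_Obj D.cod_in_Obj by simp

lemma is_functor_Fmu: "is_functor (prod_pcat C D) D (Fmu_ob D mu Fo) (Fmu_mor D mu Fm)"
  unfolding is_functor_def
proof (intro conjI ballI allI impI)
  fix P assume "P \<in> Obj (prod_pcat C D)"
  then obtain X Y where P: "P = (X, Y)" "X \<in> Obj C" "Y \<in> Obj D" by auto
  show "Fmu_ob D mu Fo P \<in> Obj D" using D.pplus_ob_in_Obj disj_ob_m0_m1 F.G_ob P by simp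
  show "Fmu_mor D mu Fm (Idm (prod_pcat C D) P) = Idm D (Fmu_ob D mu Fo P)"
    using F.G_Idm D.act_mor_Idm[OF inj_m0] D.act_mor_Idm[OF inj_m1] F.G_ob P D.pplus_mor_Idm[OF disj_ob_m0_m1]
    by simp
next
  fix f assume "f \<in> Mor (prod_pcat C D)"
  then obtain a b where f: "f = (a, b)" "a \<in> Mor C" "b \<in> Mor D" by auto
  show "Fmu_mor D mu Fm f \<in> hom D (Fmu_ob D mu Fo (Dom (prod_pcat C D) f)) (Fmu_ob D mu Fo (Cod (prod_pcat C D) f))"
    unfolding hom_def using D.pplus_morD[OF disj_mor_m0_m1[OF F.G_mor[OF f(2)] f(3)]]
      D.act_morD[OF inj_m0 inj_m0] D.act_morD[OF inj_m1 inj_m1] F.G_mor F.G_dom F.G_cod f by simp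
next
  fix f g
  assume "f \<in> Mor (prod_pcat C D) \<and> g \<in> Mor (prod_pcat C D) \<and> Cod (prod_pcat C D) f = Dom (prod_pcat C D) g"
  then obtain a b a' b' where fg: "f = (a, b)" "g = (a', b')" and m: "a \<in> Mor C" "b \<in> Mor D" "a' \<in> Mor C"
    "b' \<in> Mor D" "Cod C a = Dom C a'" "Cod D b = Dom D b'" by (cases f; cases g) auto
  have "act_mor D m0 m0 (Fm (Comp C a' a)) = Comp D (act_mor D m0 m0 (Fm a')) (act_mor D m0 m0 (Fm a))"
    using F.G_comp[OF m(1,3,5)] D.act_mor_comp[OF inj_m0 inj_m0 inj_m0 F.G_mor[OF m(1)] F.G_mor[OF m(3)]]
      F.G_dom F.G_cod m by simp
  moreover have "act_mor D m1 m1 (Comp D b' b) = Comp D (act_mor D m1 m1 b') (act_mor D m1 m1 b)"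
    using D.act_mor_comp[OF inj_m1 inj_m1 inj_m1 m(2,4,6)] by simp
  ultimately show "Fmu_mor D mu Fm (Comp (prod_pcat C D) g f) = Comp D (Fmu_mor D mu Fm g) (Fmu_mor D mu Fm f)"
    using D.pplus_mor_comp[OF disj_mor_m0_m1 disj_mor_m0_m1] F.G_mor F.G_dom F.G_cod m fg
      D.act_morD[OF inj_m0 inj_m0] D.act_morD[OF inj_m1 inj_m1] by simp
qed (use category_prod D.category in simp_all)

lemma disj_ob_m0_m1_pairwise:
  assumes A: "disj_ob D A A'" and B: "disj_ob D B B'"
  shows "disj_ob D (act_ob D m0 A) (act_ob D m1 B)" "disj_ob D (act_ob D m0 A) (act_ob D m0 A')"
    "disj_ob D (act_ob D m0 A) (act_ob D m1 B')" "disj_ob D (act_ob D m1 B) (act_ob D m0 A')"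
    "disj_ob D (act_ob D m1 B) (act_ob D m1 B')" "disj_ob D (act_ob D m0 A') (act_ob D m1 B')"
  using A B disj_ob_m0_m1 D.disj_ob_act_ob[OF inj_m0 A] D.disj_ob_act_ob[OF inj_m1 B] D.disj_ob_sym
  unfolding disj_ob_def by auto

lemma disj_mor_m0_m1_pairwise:
  assumes A: "disj_mor D a a'" and B: "disj_mor D b b'"
  shows "disj_mor D (act_mor D m0 m0 a) (act_mor D m1 m1 b)" "disj_mor D (act_mor D m0 m0 a) (act_mor D m0 m0 a')"
    "disj_mor D (act_mor D m0 m0 a) (act_mor D m1 m1 b')" "disj_mor D (act_mor D m1 m1 b) (act_mor D m0 m0 a')"
    "disj_mor D (act_mor D m1 m1 b) (act_mor D m1 m1 b')" "disj_mor D (act_mor D m0 m0 a') (act_mor D m1 m1 b')"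
proof -
  have m: "a \<in> Mor D" "a' \<in> Mor D" "b \<in> Mor D" "b' \<in> Mor D" using A B unfolding disj_mor_def by auto
  have "disj_ob D (Dom D a) (Dom D a')" "disj_ob D (Cod D a) (Cod D a')"
    "disj_ob D (Dom D b) (Dom D b')" "disj_ob D (Cod D b) (Cod D b')"
    using A B unfolding disj_mor_def by auto
  note dom = disj_ob_m0_m1_pairwise[OF this(1,3)] and cod = disj_ob_m0_m1_pairwise[OF this(2,4)]
  show "disj_mor D (act_mor D m0 m0 a) (act_mor D m1 m1 b)" "disj_mor D (act_mor D m0 m0 a) (act_mor D m0 m0 a')"
    "disj_mor D (act_mor D m0 m0 a) (act_mor D m1 m1 b')" "disj_mor D (act_mor D m1 m1 b) (act_mor D m0 m0 a')"
    "disj_mor D (act_mor D m1 m1 b) (act_mor D m1 m1 b')" "disj_mor D (act_mor D m0 m0 a') (act_mor D m1 m1 b')"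
    unfolding disj_mor_def using dom cod m D.act_morD[OF inj_m0 inj_m0] D.act_morD[OF inj_m1 inj_m1] by simp_all
qed

lemma preserves_sums_Fmu: "preserves_sums (prod_pcat C D) D (Fmu_ob D mu Fo) (Fmu_mor D mu Fm)"
  unfolding preserves_sums_def split_paired_All
proof (intro conjI allI impI)
  show "Fmu_ob D mu Fo (pzero (prod_pcat C D)) = pzero D"
    using F.G_pzero D.act_ob_pzero inj_m0 inj_m1 D.pplus_ob_pzero D.pzero_in_Obj by simp
next
  fix X Y X' Y' assume "disj_ob (prod_pcat C D) (X, Y) (X', Y')"
  then have XX': "disj_ob C X X'" and YY': "disj_ob D Y Y'" using disj_ob_prodD by auto
  note p = disj_ob_m0_m1_pairwise[OF F.G_disj_ob[OF XX'] YY']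
  note right = D.disj_ob_pplus_ob_right
  show "disj_ob D (Fmu_ob D mu Fo (X, Y)) (Fmu_ob D mu Fo (X', Y'))"
    using D.disj_ob_pplus_ob_left[OF right[OF p(2) p(3) p(6)] right[OF p(4) p(5) p(6)] p(1)] by simp
  show "Fmu_ob D mu Fo (pplus_ob (prod_pcat C D) (X, Y) (X', Y'))
      = pplus_ob D (Fmu_ob D mu Fo (X, Y)) (Fmu_ob D mu Fo (X', Y'))"
    using F.G_pplus_ob[OF XX'] D.act_ob_pplus_ob[OF inj_m0 F.G_disj_ob[OF XX']] D.act_ob_pplus_ob[OF inj_m1 YY']
      D.pplus_ob_swap_middle[OF p(2) p(1) p(3) D.disj_ob_sym[OF p(4)] p(6) p(5)] by simp
next
  fix a b a' b' assume "disj_mor (prod_pcat C D) (a, b) (a', b')"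
  then have aa': "disj_mor C a a'" and bb': "disj_mor D b b'" using disj_mor_prodD by auto
  have Faa': "disj_mor D (Fm a) (Fm a')"
    using aa' F.G_mor F.G_dom F.G_cod F.G_disj_ob unfolding disj_mor_def by simp
  note q = disj_mor_m0_m1_pairwise[OF Faa' bb']
  show "Fmu_mor D mu Fm (pplus_mor (prod_pcat C D) (a, b) (a', b'))
      = pplus_mor D (Fmu_mor D mu Fm (a, b)) (Fmu_mor D mu Fm (a', b'))"
    using F.G_pplus_mor[OF aa'] D.act_mor_pplus_mor[OF inj_m0 inj_m0 Faa'] D.act_mor_pplus_mor[OF inj_m1 inj_m1 bb']
      D.pplus_mor_swap_middle[OF q(2) q(1) q(3) D.disj_mor_sym[OF q(4)] q(6) q(5)] by simp
qed

sublocale Cyl: pushforward "prod_pcat C D" D "Fmu_ob D mu Fo" "Fmu_mor D mu Fm"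
  by unfold_locales (rule is_functor_Fmu, rule preserves_sums_Fmu)

lemma parsummable_Cyl: "parsummable (Cyl C D mu Fo Fm)"
  unfolding Cyl_def by (rule Cyl.parsummable_push)

lemma pmorph_I1: "pmorph C (Cyl C D mu Fo Fm) (I1_ob D) (I1_mor C D mu Fm)"
proof -
  have I1: "I1_ob D = (\<lambda>X. X) \<circ> (\<lambda>X. (X, pzero D))"
    "I1_mor C D mu Fm = push_I (prod_pcat C D) (Fmu_mor D mu Fm) \<circ> (\<lambda>f. (f, Idm D (pzero D)))"
    by (auto simp: I1_ob_def I1_mor_def)
  show ?thesis
    unfolding I1 Cyl_def by (rule pmorph_compose[OF pmorph_embed_fst Cyl.pmorph_push_I disj_ob_embed_fst])
qed

lemma pmorph_I2: "pmorph D (Cyl C D mu Fo Fm) (I2_ob C) (I2_mor C D mu Fm)"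
proof -
  have I2: "I2_ob C = (\<lambda>X. X) \<circ> (\<lambda>Y. (pzero C, Y))"
    "I2_mor C D mu Fm = push_I (prod_pcat C D) (Fmu_mor D mu Fm) \<circ> (\<lambda>g. (Idm C (pzero C), g))"
    by (auto simp: I2_ob_def I2_mor_def)
  show ?thesis
    unfolding I2 Cyl_def by (rule pmorph_compose[OF pmorph_embed_snd Cyl.pmorph_push_I disj_ob_embed_snd])
qed

lemma Fmu_ob_I1: "X \<in> Obj C \<Longrightarrow> Fmu_ob D mu Fo (I1_ob D X) = act_ob D m0 (Fo X)"
  using D.act_ob_pzero[OF inj_m1] D.pplus_ob_pzero D.act_ob_in_Obj[OF inj_m0] F.G_ob by (simp add: I1_ob_def)

lemma Fmu_ob_I2: "Y \<in> Obj D \<Longrightarrow> Fmu_ob D mu Fo (I2_ob C Y) = act_ob D m1 Y"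
  using F.G_pzero D.act_ob_pzero[OF inj_m0] D.pzero_pplus_ob D.act_ob_in_Obj[OF inj_m1] by (simp add: I2_ob_def)

lemma Fmu_mor_I1: "f \<in> Mor C \<Longrightarrow> snd (snd (I1_mor C D mu Fm f)) = act_mor D m0 m0 (Fm f)"
  using D.struct_iso_pzero[OF inj_m1 inj_m1] D.pplus_mor_pzero D.act_morD[OF inj_m0 inj_m0] F.G_mor
  by (simp add: I1_mor_def push_I_def)

lemma Fmu_mor_I2: "g \<in> Mor D \<Longrightarrow> snd (snd (I2_mor C D mu Fm g)) = act_mor D m1 m1 g"
  using F.G_Idm C.pzero_in_Obj F.G_pzero D.struct_iso_pzero[OF inj_m0 inj_m0] D.pzero_pplus_mor
    D.act_morD[OF inj_m1 inj_m1]
  by (simp add: I2_mor_def push_I_def)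

lemma equivalence_I2: "equivalence D (Cyl C D mu Fo Fm) (I2_ob C) (I2_mor C D mu Fm)"
proof -
  have "nat_iso D D (\<lambda>Y. Y) (\<lambda>g. g) (Fmu_ob D mu Fo \<circ> I2_ob C) ((snd \<circ> snd) \<circ> I2_mor C D mu Fm)
      (struct_iso D m1 id)"
    by (rule nat_iso_cong[OF D.nat_iso_identity_act[OF inj_m1]]) (simp_all add: Fmu_ob_I2 Fmu_mor_I2)
  moreover have "nat_iso D D (Fmu_ob D mu Fo \<circ> I2_ob C) ((snd \<circ> snd) \<circ> I2_mor C D mu Fm) (\<lambda>Y. Y) (\<lambda>g. g)
      (struct_iso D id m1)"
    by (rule nat_iso_cong[OF D.nat_iso_act_identity[OF inj_m1]]) (simp_all add: Fmu_ob_I2 Fmu_mor_I2)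
  ultimately have "equivalence D D (Fmu_ob D mu Fo \<circ> I2_ob C) ((snd \<circ> snd) \<circ> I2_mor C D mu Fm)"
    by (rule equivalence_nat_iso[OF equivalence_identity[OF D.category]])
  then show ?thesis
    using Cyl.equivalence_push pmorph_I2 unfolding pmorph_def Cyl_def by blast
qed

lemma equivalence_I1:
  assumes "equivalence C D Fo Fm"
  shows "equivalence C (Cyl C D mu Fo Fm) (I1_ob D) (I1_mor C D mu Fm)"
proof -
  have "nat_iso C D Fo Fm (Fmu_ob D mu Fo \<circ> I1_ob D) ((snd \<circ> snd) \<circ> I1_mor C D mu Fm)
      (struct_iso D m0 id \<circ> Fo)"
    by (rule nat_iso_cong[OF nat_iso_whisker_left[OF D.nat_iso_identity_act[OF inj_m0] F_functor]])
      (simp_all add: Fmu_ob_I1 Fmu_mor_I1)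
  moreover have "nat_iso C D (Fmu_ob D mu Fo \<circ> I1_ob D) ((snd \<circ> snd) \<circ> I1_mor C D mu Fm) Fo Fm
      (struct_iso D id m0 \<circ> Fo)"
    by (rule nat_iso_cong[OF nat_iso_whisker_left[OF D.nat_iso_act_identity[OF inj_m0] F_functor]])
      (simp_all add: Fmu_ob_I1 Fmu_mor_I1)
  ultimately have "equivalence C D (Fmu_ob D mu Fo \<circ> I1_ob D) ((snd \<circ> snd) \<circ> I1_mor C D mu Fm)"
    by (rule equivalence_nat_iso[OF assms])
  then show ?thesis
    using Cyl.equivalence_push pmorph_I1 unfolding pmorph_def Cyl_def by blast
qed

end

theorem corollary3p14:
  fixes C :: "('a, 'b) pcat" and D :: "('c, 'd) pcat"
    and Fo :: "'a \<Rightarrow> 'c" and Fm :: "'b \<Rightarrow> 'd"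
    and mu :: "nat \<times> nat \<Rightarrow> nat"
  assumes "parsummable C" and "parsummable D"
    and "is_functor C D Fo Fm" and "preserves_sums C D Fo Fm"
    and "inj_on mu ({0, 1} \<times> UNIV)"
  shows "is_functor (prod_pcat C D) D (Fmu_ob D mu Fo) (Fmu_mor D mu Fm)
       \<and> preserves_sums (prod_pcat C D) D (Fmu_ob D mu Fo) (Fmu_mor D mu Fm)
       \<and> parsummable (Cyl C D mu Fo Fm)
       \<and> pmorph C (Cyl C D mu Fo Fm) (I1_ob D) (I1_mor C D mu Fm)
       \<and> pmorph D (Cyl C D mu Fo Fm) (I2_ob C) (I2_mor C D mu Fm)
       \<and> (equivalence C D Fo Fm \<longrightarrow> equivalence C (Cyl C D mu Fo Fm) (I1_ob D) (I1_mor C D mu Fm))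
       \<and> equivalence D (Cyl C D mu Fo Fm) (I2_ob C) (I2_mor C D mu Fm)"
proof -
  interpret cylinder C D Fo Fm mu
    using assms by (simp add: cylinder_def cylinder_axioms_def parsummable_pair_def parsummable_cat_def)
  show ?thesis
    using is_functor_Fmu preserves_sums_Fmu parsummable_Cyl pmorph_I1 pmorph_I2 equivalence_I1 equivalence_I2
    by blast
qed

end
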